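(* Let $X_1,X_2,\ldots$ be an irreducible Markov chain on a finite state space ${\cal X}$ with invariant distribution $\pi$. Let ${\cal S}\subseteq{\cal X}$ be non-empty, and $f:{\cal X}\to\mathbb{R}$ with $E_\pi[f]=\mu$. Define $N(k)=\min\{n:\sum_{t=1}^n I_{\cal S}(X_t)=k\}$, where $I_{\cal S}$ is the indicator of ${\cal S}$, and the estimators $\hat\mu_n=\frac1n\sum_{t=1}^n f(X_t)$ and $\tilde\mu_k=\frac1{N(k)}\sum_{t=1}^{N(k)} f(X_t)$. Then $\lim_{n\to\infty} n\,\mathrm{Var}(\hat\mu_n)=\lim_{n\to\infty} n\,\mathrm{Var}(\tilde\mu_{\lceil n\pi({\cal S})\rceil})$.
   Context: $\pi({\cal S})=\sum_{x\in{\cal S}}\pi(x)$. *)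

theory Defs
  imports "HOL-Probability.Probability"
begin

definition stochastic_matrix :: "('a::finite \<Rightarrow> 'a \<Rightarrow> real) \<Rightarrow> bool" where
  "stochastic_matrix P \<longleftrightarrow> (\<forall>x y. P x y \<ge> 0) \<and> (\<forall>x. (\<Sum>y\<in>UNIV. P x y) = 1)"

definition prob_vector :: "('a::finite \<Rightarrow> real) \<Rightarrow> bool" where
  "prob_vector p \<longleftrightarrow> (\<forall>x. p x \<ge> 0) \<and> (\<Sum>x\<in>UNIV. p x) = 1"

fun mpow :: "('a::finite \<Rightarrow> 'a \<Rightarrow> real) \<Rightarrow> nat \<Rightarrow> 'a \<Rightarrow> 'a \<Rightarrow> real" where
  "mpow P 0 x y = (if x = y then 1 else 0)"
| "mpow P (Suc n) x y = (\<Sum>z\<in>UNIV. mpow P n x z * P z y)"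

definition irreducible_chain :: "('a::finite \<Rightarrow> 'a \<Rightarrow> real) \<Rightarrow> bool" where
  "irreducible_chain P \<longleftrightarrow> (\<forall>x y. \<exists>n. mpow P n x y > 0)"

definition invariant_distribution :: "('a::finite \<Rightarrow> 'a \<Rightarrow> real) \<Rightarrow> ('a \<Rightarrow> real) \<Rightarrow> bool" where
  "invariant_distribution P \<pi> \<longleftrightarrow> prob_vector \<pi> \<and> (\<forall>y. (\<Sum>x\<in>UNIV. \<pi> x * P x y) = \<pi> y)"

text \<open>X 1, X 2, ... is a Markov chain on M with initial distribution p0 and transition
  matrix P: each X t is a random variable and the finite-dimensional distributions are
  the Markov ones. (X 0 is unused; indexing follows the paper.)\<close>
definition markov_chain ::
  "'b measure \<Rightarrow> (nat \<Rightarrow> 'b \<Rightarrow> 'a::finite) \<Rightarrow> ('a \<Rightarrow> real) \<Rightarrow> ('a \<Rightarrow> 'a \<Rightarrow> real) \<Rightarrow> bool" where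
  "markov_chain M X p0 P \<longleftrightarrow>
     prob_space M \<and> prob_vector p0 \<and> stochastic_matrix P \<and>
     (\<forall>t. X t \<in> measurable M (count_space UNIV)) \<and>
     (\<forall>n\<ge>1. \<forall>x::nat \<Rightarrow> 'a.
        measure M {\<omega>\<in>space M. \<forall>i\<in>{1..n}. X i \<omega> = x i}
          = p0 (x 1) * (\<Prod>i\<in>{1..<n}. P (x i) (x (Suc i))))"

definition dist_mass :: "('a \<Rightarrow> real) \<Rightarrow> 'a set \<Rightarrow> real" where
  "dist_mass \<pi> S = (\<Sum>x\<in>S. \<pi> x)"

definition visits :: "'a set \<Rightarrow> (nat \<Rightarrow> 'b \<Rightarrow> 'a) \<Rightarrow> nat \<Rightarrow> 'b \<Rightarrow> nat" where
  "visits S X n \<omega> = card {t\<in>{1..n}. X t \<omega> \<in> S}"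

definition hitN :: "'a set \<Rightarrow> (nat \<Rightarrow> 'b \<Rightarrow> 'a) \<Rightarrow> nat \<Rightarrow> 'b \<Rightarrow> nat" where
  "hitN S X k \<omega> = (LEAST n. visits S X n \<omega> = k)"

definition mu_hat :: "('a \<Rightarrow> real) \<Rightarrow> (nat \<Rightarrow> 'b \<Rightarrow> 'a) \<Rightarrow> nat \<Rightarrow> 'b \<Rightarrow> real" where
  "mu_hat f X n \<omega> = (1 / real n) * (\<Sum>t=1..n. f (X t \<omega>))"

definition mu_tilde :: "'a set \<Rightarrow> ('a \<Rightarrow> real) \<Rightarrow> (nat \<Rightarrow> 'b \<Rightarrow> 'a) \<Rightarrow> nat \<Rightarrow> 'b \<Rightarrow> real" where
  "mu_tilde S f X k \<omega> = (1 / real (hitN S X k \<omega>)) * (\<Sum>t=1..hitN S X k \<omega>. f (X t \<omega>))"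

end

theory Submission
  imports Defs "HOL-Real_Asymp.Real_Asymp"
begin

text \<open>
  Solving the Poisson equation \<open>h - P h = f - \<mu>\<close> turns \<open>\<Sum>\<^sub>t\<^sub>\<le>\<^sub>n f(X\<^sub>t) - n \<mu>\<close> into a
  martingale with bounded increments plus bounded boundary terms. The martingale has variance
  \<open>n \<sigma>\<^sup>2 + O(1)\<close>, so \<open>n Var(mu_hat n)\<close> converges.

  For the second estimator put \<open>k\<^sub>n = \<lceil>n \<pi>(S)\<rceil>\<close> and \<open>r = n\<^sup>1\<^sup>/\<^sup>5\<close>. Off an event of
  probability \<open>O(n\<^sup>2 exp(-c r))\<close>, obtained from an Azuma-Hoeffding bound for the visit counts
  and for the partial sums of \<open>f\<close>, the time \<open>N(k\<^sub>n)\<close> lies within \<open>O(r\<^sup>3)\<close> of \<open>n\<close> and the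
  partial sums move by \<open>O(r\<^sup>2)\<close> in between; there \<open>mu_tilde k\<^sub>n - mu_hat n = O(n\<^sup>-\<^sup>3\<^sup>/\<^sup>5)\<close>. As both
  estimators are bounded by \<open>\<parallel>f\<parallel>\<close> everywhere, \<open>n Var(mu_tilde k\<^sub>n - mu_hat n) \<rightarrow> 0\<close>, and by
  Cauchy-Schwarz the two scaled variances have the same limit.
\<close>

section \<open>Expectations of functions of finitely many states\<close>

definition paths :: "nat \<Rightarrow> (nat \<Rightarrow> 'a) set" where
  "paths m = Pi\<^sub>E {1..m} (\<lambda>_. UNIV)"

definition path_prob :: "('a \<Rightarrow> real) \<Rightarrow> ('a \<Rightarrow> 'a \<Rightarrow> real) \<Rightarrow> nat \<Rightarrow> (nat \<Rightarrow> 'a) \<Rightarrow> real" where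
  "path_prob p0 P m x = p0 (x 1) * (\<Prod>i\<in>{1..<m}. P (x i) (x (Suc i)))"

definition path_expectation ::
  "('a \<Rightarrow> real) \<Rightarrow> ('a \<Rightarrow> 'a \<Rightarrow> real) \<Rightarrow> nat \<Rightarrow> ((nat \<Rightarrow> 'a) \<Rightarrow> real) \<Rightarrow> real" where
  "path_expectation p0 P m G = (\<Sum>x\<in>paths m. path_prob p0 P m x * G x)"

definition depends_upto :: "nat \<Rightarrow> ((nat \<Rightarrow> 'a) \<Rightarrow> 'c) \<Rightarrow> bool" where
  "depends_upto m G \<longleftrightarrow> (\<forall>x x'. (\<forall>i\<in>{1..m}. x i = x' i) \<longrightarrow> G x = G x')"

lemma finite_paths [simp]: "finite (paths m :: (nat \<Rightarrow> 'a::finite) set)"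
  unfolding paths_def by (intro finite_PiE) auto

lemma depends_upto_mono: "depends_upto m G \<Longrightarrow> m \<le> m' \<Longrightarrow> depends_upto m' G"
  unfolding depends_upto_def by auto

lemma depends_upto_comp: "depends_upto m G \<Longrightarrow> depends_upto m (\<lambda>x. \<phi> (G x))"
  unfolding depends_upto_def by metis

lemma depends_upto_restrict: "depends_upto m G \<Longrightarrow> G (restrict x {1..m}) = G x"
  unfolding depends_upto_def by auto

lemma path_prob_Suc:
  assumes "m \<ge> 1"
  shows "path_prob p0 P (Suc m) (g(Suc m := y)) = path_prob p0 P m g * P (g m) y"
proof -
  have "{1..<Suc m} = insert m {1..<m}" using assms by auto
  moreover have "(\<Prod>i\<in>{1..<m}. P ((g(Suc m := y)) i) ((g(Suc m := y)) (Suc i)))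
      = (\<Prod>i\<in>{1..<m}. P (g i) (g (Suc i)))"
    by (intro prod.cong) auto
  ultimately show ?thesis using assms unfolding path_prob_def by simp
qed

lemma path_expectation_Suc:
  fixes F :: "(nat \<Rightarrow> 'a::finite) \<Rightarrow> real"
  assumes m: "m \<ge> 1" and F: "depends_upto m F"
  shows "path_expectation p0 P (Suc m) (\<lambda>x. F x * \<phi> (x m) (x (Suc m)))
       = path_expectation p0 P m (\<lambda>x. F x * (\<Sum>y\<in>UNIV. P (x m) y * \<phi> (x m) y))"
proof -
  have ins: "{1..Suc m} = insert (Suc m) {1..m}" by auto
  have paths_Suc: "paths (Suc m) = (\<lambda>(y, g). g(Suc m := y)) ` (UNIV \<times> paths m)"
    unfolding paths_def ins PiE_insert_eq by simp
  have inj: "inj_on (\<lambda>(y, g). g(Suc m := y)) (UNIV \<times> (paths m :: (nat \<Rightarrow> 'a) set))"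
    unfolding paths_def using inj_combinator[of "Suc m" "{1..m}" "\<lambda>_. UNIV :: 'a set"] by simp
  have F_upd: "F (g(Suc m := y)) = F g" for g y
    using F unfolding depends_upto_def by auto
  have "path_expectation p0 P (Suc m) (\<lambda>x. F x * \<phi> (x m) (x (Suc m)))
      = (\<Sum>(y, g)\<in>UNIV \<times> paths m. path_prob p0 P m g * P (g m) y * (F g * \<phi> (g m) y))"
    unfolding path_expectation_def paths_Suc using m
    by (subst sum.reindex[OF inj]) (auto simp: path_prob_Suc F_upd intro!: sum.cong)
  also have "\<dots> = (\<Sum>g\<in>paths m. \<Sum>y\<in>UNIV. path_prob p0 P m g * P (g m) y * (F g * \<phi> (g m) y))"
    by (subst sum.cartesian_product[symmetric]) (rule sum.swap)
  also have "\<dots> = path_expectation p0 P m (\<lambda>x. F x * (\<Sum>y\<in>UNIV. P (x m) y * \<phi> (x m) y))"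
    unfolding path_expectation_def by (intro sum.cong refl) (simp add: sum_distrib_left mult_ac)
  finally show ?thesis .
qed

locale finite_markov_chain =
  fixes M :: "'b measure" and X :: "nat \<Rightarrow> 'b \<Rightarrow> 'a::finite" and p0 :: "'a \<Rightarrow> real"
    and P :: "'a \<Rightarrow> 'a \<Rightarrow> real"
  assumes markov: "markov_chain M X p0 P"
begin

sublocale prob_space M
  using markov unfolding markov_chain_def by auto

lemma stochastic: "stochastic_matrix P"
  using markov unfolding markov_chain_def by auto

lemma P_nonneg: "P x y \<ge> 0"
  using stochastic unfolding stochastic_matrix_def by auto

lemma P_row_sum: "(\<Sum>y\<in>UNIV. P x y) = 1"
  using stochastic unfolding stochastic_matrix_def by auto

lemma X_measurable [measurable]: "X t \<in> measurable M (count_space UNIV)"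
  using markov unfolding markov_chain_def by auto

abbreviation E :: "nat \<Rightarrow> ((nat \<Rightarrow> 'a) \<Rightarrow> real) \<Rightarrow> real" where
  "E m G \<equiv> path_expectation p0 P m G"

lemma path_prob_nonneg: "path_prob p0 P m x \<ge> 0"
  using markov P_nonneg unfolding path_prob_def markov_chain_def prob_vector_def
  by (auto intro!: prod_nonneg mult_nonneg_nonneg)

lemma path_function_bounded:
  assumes "depends_upto m G"
  shows "\<bar>G (\<lambda>i. X i \<omega>)\<bar> \<le> Max ((\<lambda>x. \<bar>G x\<bar>) ` paths m)"
proof -
  have "restrict (\<lambda>i. X i \<omega>) {1..m} \<in> paths m" unfolding paths_def by auto
  then have "\<bar>G (restrict (\<lambda>i. X i \<omega>) {1..m})\<bar> \<le> Max ((\<lambda>x. \<bar>G x\<bar>) ` paths m)"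
    by (intro Max_ge finite_imageI finite_paths imageI)
  then show ?thesis unfolding depends_upto_restrict[OF assms] .
qed

lemma
  fixes G :: "(nat \<Rightarrow> 'a) \<Rightarrow> real"
  assumes m: "m \<ge> 1" and G: "depends_upto m G"
  shows integrable_path_function: "integrable M (\<lambda>\<omega>. G (\<lambda>i. X i \<omega>))"
    and expectation_path_function: "expectation (\<lambda>\<omega>. G (\<lambda>i. X i \<omega>)) = E m G"
proof -
  define A where "A x = {\<omega>\<in>space M. \<forall>i\<in>{1..m}. X i \<omega> = x i}" for x
  have A_sets: "A x \<in> sets M" for x
    unfolding A_def by measurable
  have prob_A: "measure M (A x) = path_prob p0 P m x" for x
    using markov m unfolding markov_chain_def path_prob_def A_def by auto
  have indicator_sum: "G (\<lambda>i. X i \<omega>) = (\<Sum>x\<in>paths m. G x * indicator (A x) \<omega>)"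
    if \<omega>: "\<omega> \<in> space M" for \<omega>
  proof -
    define x0 where "x0 = restrict (\<lambda>i. X i \<omega>) {1..m}"
    have x0: "x0 \<in> paths m" unfolding paths_def x0_def by auto
    have "\<omega> \<in> A x \<longleftrightarrow> x = x0" if "x \<in> paths m" for x
      using that \<omega> unfolding A_def x0_def paths_def
      by (auto simp: PiE_def extensional_def fun_eq_iff)
    then have "(\<Sum>x\<in>paths m. G x * indicator (A x) \<omega>) = (\<Sum>x\<in>paths m. if x = x0 then G x else 0)"
      by (intro sum.cong) auto
    also have "\<dots> = G x0" using x0 by simp
    finally show ?thesis unfolding x0_def depends_upto_restrict[OF G] by simp
  qed
  have int: "integrable M (\<lambda>\<omega>. \<Sum>x\<in>paths m. G x * indicator (A x) \<omega>)"
    using A_sets by (intro Bochner_Integration.integrable_sum integrable_mult_right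
        integrable_real_indicator) (auto simp: less_top[symmetric])
  show "integrable M (\<lambda>\<omega>. G (\<lambda>i. X i \<omega>))"
    by (subst Bochner_Integration.integrable_cong[OF refl indicator_sum]) (use int in auto)
  have "expectation (\<lambda>\<omega>. G (\<lambda>i. X i \<omega>))
      = integral\<^sup>L M (\<lambda>\<omega>. \<Sum>x\<in>paths m. G x * indicator (A x) \<omega>)"
    by (intro Bochner_Integration.integral_cong) (auto simp: indicator_sum)
  also have "\<dots> = (\<Sum>x\<in>paths m. G x * measure M (A x))"
    using A_sets by (subst Bochner_Integration.integral_sum) (auto simp: less_top[symmetric])
  finally show "expectation (\<lambda>\<omega>. G (\<lambda>i. X i \<omega>)) = E m G"
    unfolding path_expectation_def prob_A by (simp add: mult.commute)
qed

lemma E_mono: "(\<And>x. G x \<le> H x) \<Longrightarrow> E m G \<le> E m H"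
  unfolding path_expectation_def by (intro sum_mono mult_left_mono path_prob_nonneg) auto

lemma E_add: "E m (\<lambda>x. G x + H x) = E m G + E m H"
  unfolding path_expectation_def by (simp add: distrib_left sum.distrib)

lemma E_diff: "E m (\<lambda>x. G x - H x) = E m G - E m H"
  unfolding path_expectation_def by (simp add: right_diff_distrib sum_subtractf)

lemma E_cmult: "E m (\<lambda>x. c * G x) = c * E m G"
  unfolding path_expectation_def by (simp add: sum_distrib_left mult_ac)

lemma E_cmult_right: "E m (\<lambda>x. G x * c) = E m G * c"
  using E_cmult[of m c G] by (simp add: mult.commute)

lemma E_sum: "E m (\<lambda>x. \<Sum>i\<in>I. G i x) = (\<Sum>i\<in>I. E m (G i))"
  unfolding path_expectation_def by (simp add: sum_distrib_left sum.swap[of _ I])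

lemma E_zero: "E m (\<lambda>_. 0) = 0"
  unfolding path_expectation_def by simp

lemma E_extend:
  assumes "1 \<le> m" "m \<le> m'" "depends_upto m G"
  shows "E m' G = E m G"
  using expectation_path_function[of m G] expectation_path_function[of m' G]
    assms depends_upto_mono[OF assms(3,2)] by simp

lemma E_const: "m \<ge> 1 \<Longrightarrow> E m (\<lambda>_. c) = c"
  using expectation_path_function[of m "\<lambda>_. c"] prob_space by (simp add: depends_upto_def)

lemma E_markov_step:
  assumes "1 \<le> j" "j < m" "depends_upto j F"
  shows "E m (\<lambda>x. F x * \<phi> (x j) (x (Suc j)))
       = E m (\<lambda>x. F x * (\<Sum>y\<in>UNIV. P (x j) y * \<phi> (x j) y))"
proof -
  have "depends_upto (Suc j) (\<lambda>x. F x * \<phi> (x j) (x (Suc j)))"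
    using assms(1,3) unfolding depends_upto_def by (simp add: Ball_def)
  then have "E m (\<lambda>x. F x * \<phi> (x j) (x (Suc j))) = E (Suc j) (\<lambda>x. F x * \<phi> (x j) (x (Suc j)))"
    using assms by (intro E_extend) auto
  also have "\<dots> = E j (\<lambda>x. F x * (\<Sum>y\<in>UNIV. P (x j) y * \<phi> (x j) y))"
    using assms by (intro path_expectation_Suc) auto
  also have "\<dots> = E m (\<lambda>x. F x * (\<Sum>y\<in>UNIV. P (x j) y * \<phi> (x j) y))"
    using assms by (intro E_extend[symmetric]) (auto simp: depends_upto_def Ball_def)
  finally show ?thesis .
qed

lemma E_markov_step_single:
  "1 \<le> j \<Longrightarrow> j < m \<Longrightarrow>
    E m (\<lambda>x. \<phi> (x j) (x (Suc j))) = E m (\<lambda>x. \<Sum>y\<in>UNIV. P (x j) y * \<phi> (x j) y)"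
  using E_markov_step[of j m "\<lambda>_. 1" \<phi>] by (simp add: depends_upto_def)

end

section \<open>The Poisson equation\<close>

definition apply_kernel :: "('a::finite \<Rightarrow> 'a \<Rightarrow> real) \<Rightarrow> ('a \<Rightarrow> real) \<Rightarrow> 'a \<Rightarrow> real" where
  "apply_kernel A h x = (\<Sum>y\<in>UNIV. A x y * h y)"

lemma apply_kernel_funpow: "(apply_kernel A ^^ n) h x = (\<Sum>y\<in>UNIV. mpow A n x y * h y)"
proof (induction n arbitrary: h x)
  case 0
  have "(\<Sum>y\<in>UNIV. (if x = y then 1 else 0) * h y) = (\<Sum>y\<in>UNIV. if x = y then h y else 0)"
    by (intro sum.cong) auto
  then show ?case by simp
next
  case (Suc n)
  have "(apply_kernel A ^^ Suc n) h x = (apply_kernel A ^^ n) (apply_kernel A h) x"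
    by (simp add: funpow_Suc_right del: funpow.simps)
  also have "\<dots> = (\<Sum>y\<in>UNIV. mpow A n x y * (\<Sum>z\<in>UNIV. A y z * h z))"
    by (simp add: Suc apply_kernel_def)
  also have "\<dots> = (\<Sum>z\<in>UNIV. (\<Sum>y\<in>UNIV. mpow A n x y * A y z) * h z)"
    by (simp add: sum_distrib_left sum_distrib_right mult.assoc mult.left_commute, rule sum.swap)
  finally show ?case by simp
qed

lemma apply_kernel_sum: "apply_kernel A (\<lambda>y. \<Sum>i\<in>I. F i y) x = (\<Sum>i\<in>I. apply_kernel A (F i) x)"
  unfolding apply_kernel_def by (simp add: sum_distrib_left sum.swap[of _ I])

lemma apply_kernel_cmult: "apply_kernel A (\<lambda>y. c * F y) x = c * apply_kernel A F x"
  unfolding apply_kernel_def by (simp add: sum_distrib_left mult_ac)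

lemma apply_kernel_uminus: "apply_kernel A (\<lambda>y. - F y) x = - apply_kernel A F x"
  using apply_kernel_cmult[of A "-1" F x] by simp

lemma sum_invariant_apply_kernel_funpow:
  assumes "\<And>y. (\<Sum>x\<in>UNIV. \<pi> x * A x y) = \<pi> y"
  shows "(\<Sum>x\<in>UNIV. \<pi> x * (apply_kernel A ^^ n) g x) = (\<Sum>x\<in>UNIV. \<pi> x * g x)"
proof (induction n)
  case (Suc n)
  have "(\<Sum>x\<in>UNIV. \<pi> x * (apply_kernel A ^^ Suc n) g x)
      = (\<Sum>y\<in>UNIV. (\<Sum>x\<in>UNIV. \<pi> x * A x y) * (apply_kernel A ^^ n) g y)"
    unfolding funpow.simps o_def apply_kernel_def
    by (simp add: sum_distrib_left sum_distrib_right mult.assoc, rule sum.swap)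
  then show ?case using Suc by (simp add: assms)
qed simp

lemma mpow_nonneg: "(\<And>x y. A x y \<ge> 0) \<Longrightarrow> mpow A n x y \<ge> 0"
  by (induction n arbitrary: y) (auto intro!: sum_nonneg mult_nonneg_nonneg)

lemma stochastic_matrix_mpow:
  assumes "stochastic_matrix A"
  shows "stochastic_matrix (mpow A n)"
  unfolding stochastic_matrix_def
proof (intro conjI allI)
  show "mpow A n x y \<ge> 0" for x y
    using assms by (intro mpow_nonneg) (auto simp: stochastic_matrix_def)
  show "(\<Sum>y\<in>UNIV. mpow A n x y) = 1" for x
  proof (induction n)
    case (Suc n)
    have "(\<Sum>y\<in>UNIV. mpow A (Suc n) x y) = (\<Sum>z\<in>UNIV. mpow A n x z * (\<Sum>y\<in>UNIV. A z y))"
      by (simp add: sum_distrib_left, rule sum.swap)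
    then show ?case using Suc assms by (simp add: stochastic_matrix_def)
  qed simp
qed

lemma sum_invariant_mpow:
  assumes "\<And>y. (\<Sum>x\<in>UNIV. \<pi> x * A x y) = \<pi> y"
  shows "(\<Sum>x\<in>UNIV. \<pi> x * mpow A n x y) = \<pi> y"
  using sum_invariant_apply_kernel_funpow[OF assms, of n "\<lambda>z. of_bool (z = y)"]
  by (simp add: apply_kernel_funpow if_distrib cong: if_cong)

definition oscillation :: "('a::finite \<Rightarrow> real) \<Rightarrow> real" where
  "oscillation g = Max (range g) - Min (range g)"

text \<open>Doeblin's argument: two rows of a kernel whose entries are all at least \<open>\<delta>\<close> overlap
  in mass at least \<open>\<delta>\<close>, and the overlap cancels in the difference of the averages.\<close>

lemma oscillation_apply_kernel_le:
  fixes r :: "'a::finite \<Rightarrow> 'a \<Rightarrow> real"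
  assumes st: "stochastic_matrix r" and lb: "\<And>x y. r x y \<ge> \<delta>" and \<delta>: "\<delta> \<ge> 0"
  shows "oscillation (apply_kernel r g) \<le> (1 - \<delta>) * oscillation g"
proof -
  define Mx where "Mx = Max (range g)"
  define Mn where "Mn = Min (range g)"
  have gM: "g y \<le> Mx" "Mn \<le> g y" for y unfolding Mx_def Mn_def by auto
  have row_sum: "(\<Sum>y\<in>UNIV. r x y) = 1" for x using st by (auto simp: stochastic_matrix_def)
  have "apply_kernel r g x - apply_kernel r g x' \<le> (1 - \<delta>) * (Mx - Mn)" for x x'
  proof -
    define m where "m y = min (r x y) (r x' y)" for y
    have m_le: "m y \<le> r x y" "m y \<le> r x' y" for y unfolding m_def by auto
    have "\<delta> \<le> m undefined" using lb unfolding m_def by auto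
    also have "m undefined \<le> (\<Sum>y\<in>UNIV. m y)"
      by (rule member_le_sum) (auto simp: m_def intro: lb order_trans[OF \<delta>])
    finally have overlap: "\<delta> \<le> (\<Sum>y\<in>UNIV. m y)" .
    have "apply_kernel r g x = (\<Sum>y\<in>UNIV. (r x y - m y) * g y) + (\<Sum>y\<in>UNIV. m y * g y)"
      unfolding apply_kernel_def by (simp add: left_diff_distrib sum_subtractf)
    also have "(\<Sum>y\<in>UNIV. (r x y - m y) * g y) \<le> (\<Sum>y\<in>UNIV. (r x y - m y) * Mx)"
      by (intro sum_mono mult_left_mono gM) (simp add: m_le)
    finally have upper: "apply_kernel r g x \<le> (1 - (\<Sum>y\<in>UNIV. m y)) * Mx + (\<Sum>y\<in>UNIV. m y * g y)"
      by (simp add: sum_distrib_right[symmetric] sum_subtractf row_sum)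
    have "(\<Sum>y\<in>UNIV. (r x' y - m y) * Mn) \<le> (\<Sum>y\<in>UNIV. (r x' y - m y) * g y)"
      by (intro sum_mono mult_left_mono gM) (simp add: m_le)
    also have "(\<Sum>y\<in>UNIV. (r x' y - m y) * g y) + (\<Sum>y\<in>UNIV. m y * g y) = apply_kernel r g x'"
      unfolding apply_kernel_def by (simp add: left_diff_distrib sum_subtractf)
    finally have lower: "(1 - (\<Sum>y\<in>UNIV. m y)) * Mn + (\<Sum>y\<in>UNIV. m y * g y) \<le> apply_kernel r g x'"
      by (simp add: sum_distrib_right[symmetric] sum_subtractf row_sum)
    have "(1 - (\<Sum>y\<in>UNIV. m y)) * (Mx - Mn) \<le> (1 - \<delta>) * (Mx - Mn)"
      using overlap gM[of undefined] by (intro mult_right_mono) auto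
    with upper lower show ?thesis by (simp add: algebra_simps)
  qed
  moreover have "Max (range (apply_kernel r g)) \<in> range (apply_kernel r g)"
    "Min (range (apply_kernel r g)) \<in> range (apply_kernel r g)" by (intro Max_in Min_in; simp)+
  ultimately show ?thesis unfolding oscillation_def Mx_def Mn_def by force
qed

lemma abs_le_oscillation:
  assumes "prob_vector \<pi>" and "(\<Sum>x\<in>UNIV. \<pi> x * u x) = 0"
  shows "\<bar>u x\<bar> \<le> oscillation u"
proof -
  have s1: "(\<Sum>x\<in>UNIV. \<pi> x) = 1" and nn: "\<And>x. \<pi> x \<ge> 0"
    using assms(1) unfolding prob_vector_def by auto
  have "Min (range u) = (\<Sum>x\<in>UNIV. \<pi> x * Min (range u))"
    using s1 by (simp add: sum_distrib_right[symmetric])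
  also have "\<dots> \<le> (\<Sum>x\<in>UNIV. \<pi> x * u x)" by (intro sum_mono mult_left_mono nn Min_le) auto
  finally have "Min (range u) \<le> 0" using assms(2) by simp
  moreover have "(\<Sum>x\<in>UNIV. \<pi> x * u x) \<le> (\<Sum>x\<in>UNIV. \<pi> x * Max (range u))"
    by (intro sum_mono mult_left_mono nn Max_ge) auto
  then have "0 \<le> Max (range u)" using s1 assms(2) by (simp add: sum_distrib_right[symmetric])
  moreover have "Min (range u) \<le> u x" "u x \<le> Max (range u)" by auto
  ultimately show ?thesis unfolding oscillation_def by linarith
qed

lemma norm_apply_kernel_funpow_le:
  assumes st: "stochastic_matrix R" and lb: "\<And>x y. R x y \<ge> \<delta>" and \<delta>: "\<delta> \<ge> 0"
    and \<pi>: "prob_vector \<pi>" and inv: "\<And>y. (\<Sum>x\<in>UNIV. \<pi> x * R x y) = \<pi> y"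
    and g: "(\<Sum>x\<in>UNIV. \<pi> x * g x) = 0"
  shows "\<bar>(apply_kernel R ^^ j) g x\<bar> \<le> (1 - \<delta>) ^ j * oscillation g"
proof -
  have "\<delta> \<le> 1"
    using lb[of x x] member_le_sum[of x UNIV "R x"] st by (auto simp: stochastic_matrix_def)
  then have osc: "oscillation ((apply_kernel R ^^ j) g) \<le> (1 - \<delta>) ^ j * oscillation g"
  proof (induction j)
    case (Suc j)
    have "oscillation ((apply_kernel R ^^ Suc j) g) \<le> (1 - \<delta>) * oscillation ((apply_kernel R ^^ j) g)"
      using oscillation_apply_kernel_le[OF st lb \<delta>] by simp
    also have "\<dots> \<le> (1 - \<delta>) * ((1 - \<delta>) ^ j * oscillation g)"
      using Suc by (intro mult_left_mono) auto
    finally show ?case by (simp add: mult.assoc)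
  qed simp
  have "\<bar>(apply_kernel R ^^ j) g x\<bar> \<le> oscillation ((apply_kernel R ^^ j) g)"
    by (rule abs_le_oscillation[OF \<pi>]) (simp add: sum_invariant_apply_kernel_funpow[OF inv] g)
  with osc show ?thesis by linarith
qed

text \<open>The iterates \<open>R\<^sup>j g\<close> of a centred \<open>g\<close> decay geometrically, so \<open>h = \<Sum>\<^sub>j R\<^sup>j g\<close>
  converges and solves \<open>h - R h = g\<close>.\<close>

lemma poisson_equation_solvable_if_pos:
  fixes R :: "'a::finite \<Rightarrow> 'a \<Rightarrow> real"
  assumes st: "stochastic_matrix R" and pos: "\<And>x y. R x y > 0"
    and \<pi>: "prob_vector \<pi>" and inv: "\<And>y. (\<Sum>x\<in>UNIV. \<pi> x * R x y) = \<pi> y"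
    and g: "(\<Sum>x\<in>UNIV. \<pi> x * g x) = 0"
  shows "\<exists>h. \<forall>x. h x - apply_kernel R h x = g x"
proof -
  define \<delta> where "\<delta> = Min (range (\<lambda>(x, y). R x y))"
  have \<delta>_le: "\<delta> \<le> R x y" for x y unfolding \<delta>_def by (rule Min_le) auto
  have "\<delta> \<in> range (\<lambda>(x, y). R x y)" unfolding \<delta>_def by (rule Min_in) auto
  then have \<delta>_pos: "\<delta> > 0" using pos by auto
  have \<delta>1: "\<delta> \<le> 1"
    using \<delta>_le[of undefined undefined] member_le_sum[of undefined UNIV "R undefined"] st
    by (auto simp: stochastic_matrix_def)
  define u where "u j = (apply_kernel R ^^ j) g" for j
  have "\<bar>u j x\<bar> \<le> oscillation g * (1 - \<delta>) ^ j" for j x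
    using norm_apply_kernel_funpow_le[OF st \<delta>_le _ \<pi> inv g] \<delta>_pos
    unfolding u_def by (simp add: mult.commute)
  then have summable: "summable (\<lambda>j. u j x)" for x
    by (intro summable_comparison_test[OF _ summable_mult[OF summable_geometric]])
      (use \<delta>_pos \<delta>1 in auto)
  define h where "h x = (\<Sum>j. u j x)" for x
  have "(\<lambda>j. \<Sum>y\<in>UNIV. R x y * u j y) sums apply_kernel R h x" for x
    unfolding h_def apply_kernel_def by (intro sums_sum sums_mult summable_sums summable)
  then have "(\<lambda>j. u (Suc j) x) sums apply_kernel R h x" for x
    by (simp add: u_def apply_kernel_def)
  moreover have "(\<lambda>j. u (Suc j) x) sums (h x - u 0 x)" for x
    using sums_Suc_iff[of "\<lambda>j. u j x"] summable_sums[OF summable[of x]] unfolding h_def by simp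
  ultimately have "apply_kernel R h x = h x - g x" for x
    using sums_unique2 by (fastforce simp: u_def)
  then show ?thesis by (intro exI[of _ h] allI) simp
qed

lemma poisson_equation_of_funpow:
  assumes "\<And>x. h x - (apply_kernel Q ^^ d) h x = g x"
  shows "(\<Sum>r<d. (apply_kernel Q ^^ r) h x)
    - apply_kernel Q (\<lambda>y. \<Sum>r<d. (apply_kernel Q ^^ r) h y) x = g x"
proof -
  have "(\<Sum>r<d. (apply_kernel Q ^^ r) h x) - apply_kernel Q (\<lambda>y. \<Sum>r<d. (apply_kernel Q ^^ r) h y) x
      = - (\<Sum>r<d. (apply_kernel Q ^^ Suc r) h x - (apply_kernel Q ^^ r) h x)"
    by (simp add: apply_kernel_sum sum_subtractf)
  also have "\<dots> = h x - (apply_kernel Q ^^ d) h x"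
    by (subst sum_lessThan_telescope) simp
  finally show ?thesis using assms by simp
qed

lemma poisson_equation_solvable_if_mpow_pos:
  fixes Q :: "'a::finite \<Rightarrow> 'a \<Rightarrow> real"
  assumes st: "stochastic_matrix Q" and pos: "\<And>x y. mpow Q d x y > 0"
    and \<pi>: "prob_vector \<pi>" and inv: "\<And>y. (\<Sum>x\<in>UNIV. \<pi> x * Q x y) = \<pi> y"
    and g: "(\<Sum>x\<in>UNIV. \<pi> x * g x) = 0"
  shows "\<exists>h. \<forall>x. h x - apply_kernel Q h x = g x"
proof -
  have "apply_kernel (mpow Q d) = apply_kernel Q ^^ d"
    by (intro ext) (simp add: apply_kernel_funpow apply_kernel_def)
  moreover obtain h where "\<And>x. h x - apply_kernel (mpow Q d) h x = g x"
    using poisson_equation_solvable_if_pos[OF stochastic_matrix_mpow[OF st] pos \<pi>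
        sum_invariant_mpow[OF inv] g] by blast
  ultimately have "h x - (apply_kernel Q ^^ d) h x = g x" for x by simp
  then show ?thesis
    by (intro exI[of _ "\<lambda>y. \<Sum>r<d. (apply_kernel Q ^^ r) h y"] allI poisson_equation_of_funpow)
qed

definition lazy_kernel :: "('a \<Rightarrow> 'a \<Rightarrow> real) \<Rightarrow> 'a \<Rightarrow> 'a \<Rightarrow> real" where
  "lazy_kernel P x y = (of_bool (x = y) + P x y) / 2"

lemma apply_lazy_kernel: "apply_kernel (lazy_kernel P) h x = (h x + apply_kernel P h x) / 2"
proof -
  have "lazy_kernel P x y * h y = ((if x = y then h y else 0) + P x y * h y) / 2" for y
    by (simp add: lazy_kernel_def field_simps)
  then have "apply_kernel (lazy_kernel P) h x
      = ((\<Sum>y\<in>UNIV. if x = y then h y else 0) + apply_kernel P h x) / 2"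
    unfolding apply_kernel_def by (simp only: sum_divide_distrib[symmetric] sum.distrib)
  then show ?thesis by simp
qed

lemma lazy_kernel_nonneg: "stochastic_matrix P \<Longrightarrow> lazy_kernel P x y \<ge> 0"
  unfolding lazy_kernel_def stochastic_matrix_def by (simp add: add_nonneg_nonneg)

lemma stochastic_lazy_kernel: "stochastic_matrix P \<Longrightarrow> stochastic_matrix (lazy_kernel P)"
  using lazy_kernel_nonneg[of P]
  by (simp add: stochastic_matrix_def lazy_kernel_def sum_divide_distrib[symmetric] sum.distrib)

lemma sum_invariant_lazy_kernel:
  fixes P :: "'a::finite \<Rightarrow> 'a \<Rightarrow> real"
  assumes "\<And>y. (\<Sum>x\<in>UNIV. \<pi> x * P x y) = \<pi> y"
  shows "(\<Sum>x\<in>UNIV. \<pi> x * lazy_kernel P x y) = \<pi> y"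
proof -
  have "\<pi> x * lazy_kernel P x y = ((if x = y then \<pi> x else 0) + \<pi> x * P x y) / 2" for x
    by (simp add: lazy_kernel_def field_simps)
  then have "(\<Sum>x\<in>UNIV. \<pi> x * lazy_kernel P x y)
      = ((\<Sum>x\<in>UNIV. if x = y then \<pi> x else 0) + (\<Sum>x\<in>UNIV. \<pi> x * P x y)) / 2"
    by (simp only: sum_divide_distrib[symmetric] sum.distrib)
  also have "\<dots> = \<pi> y" using assms[of y] by simp
  finally show ?thesis .
qed

lemma mpow_lazy_kernel_ge:
  assumes st: "stochastic_matrix P"
  shows "m \<le> n \<Longrightarrow> (1/2) ^ n * mpow P m x y \<le> mpow (lazy_kernel P) n x y"
proof (induction n arbitrary: m y)
  case (Suc n)
  let ?Q = "lazy_kernel P"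
  have P: "P u v \<ge> 0" and Q: "?Q u v \<ge> 0" for u v
    using st lazy_kernel_nonneg[OF st] by (auto simp: stochastic_matrix_def)
  show ?case
  proof (cases "m \<le> n")
    case True
    have "(1/2) ^ Suc n * mpow P m x y \<le> mpow ?Q n x y * (1/2)"
      using Suc.IH[OF True, of y] by simp
    also have "\<dots> \<le> mpow ?Q n x y * ?Q y y"
      using P[of y y] mpow_nonneg[of ?Q n x y] Q by (intro mult_left_mono) (auto simp: lazy_kernel_def)
    also have "\<dots> \<le> mpow ?Q (Suc n) x y"
      by (simp, rule member_le_sum) (auto intro!: mult_nonneg_nonneg mpow_nonneg Q)
    finally show ?thesis .
  next
    case False
    then have "m = Suc n" using Suc.prems by simp
    have "(1/2) ^ Suc n * mpow P (Suc n) x y = (\<Sum>z\<in>UNIV. ((1/2) ^ n * mpow P n x z) * (P z y / 2))"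
      by (simp add: sum_distrib_left mult_ac)
    also have "\<dots> \<le> (\<Sum>z\<in>UNIV. mpow ?Q n x z * ?Q z y)"
    proof (intro sum_mono mult_mono)
      show "(1/2) ^ n * mpow P n x z \<le> mpow ?Q n x z" for z by (rule Suc.IH) simp
      show "P z y / 2 \<le> ?Q z y" for z by (simp add: lazy_kernel_def)
    qed (use P Q in \<open>auto intro: mpow_nonneg\<close>)
    also have "\<dots> = mpow ?Q (Suc n) x y" by simp
    finally show ?thesis using \<open>m = Suc n\<close> by simp
  qed
qed simp

lemma mpow_lazy_kernel_pos:
  assumes "stochastic_matrix P" and "irreducible_chain P"
  shows "\<exists>d. \<forall>x y. mpow (lazy_kernel P) d x y > 0"
proof -
  obtain n where n: "\<And>x y. mpow P (n x y) x y > 0"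
    using assms(2) unfolding irreducible_chain_def by metis
  define d where "d = Max (range (\<lambda>(x, y). n x y))"
  have "n x y \<le> d" for x y unfolding d_def by (rule Max_ge) auto
  have "mpow (lazy_kernel P) d x y > 0" for x y
  proof -
    have "0 < (1/2) ^ d * mpow P (n x y) x y" using n[of x y] by simp
    also have "\<dots> \<le> mpow (lazy_kernel P) d x y" by (rule mpow_lazy_kernel_ge[OF assms(1)]) fact
    finally show ?thesis .
  qed
  then show ?thesis by blast
qed

lemma invariant_distribution_pos:
  assumes "stochastic_matrix P" and "irreducible_chain P" and inv: "invariant_distribution P \<pi>"
  shows "\<pi> y > 0"
proof -
  have "\<exists>x. \<pi> x > 0"
  proof (rule ccontr)
    assume "\<nexists>x. \<pi> x > 0"
    then have "(\<Sum>x\<in>UNIV. \<pi> x) \<le> 0" by (intro sum_nonpos) (simp add: not_less)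
    then show False using inv unfolding invariant_distribution_def prob_vector_def by simp
  qed
  then obtain x0 n where x0: "\<pi> x0 > 0" and n: "mpow P n x0 y > 0"
    using assms(2) unfolding irreducible_chain_def by blast
  have "0 < \<pi> x0 * mpow P n x0 y" using x0 n by simp
  also have "\<dots> \<le> (\<Sum>x\<in>UNIV. \<pi> x * mpow P n x y)"
    using inv assms(1) unfolding invariant_distribution_def prob_vector_def stochastic_matrix_def
    by (intro member_le_sum[where f="\<lambda>x. \<pi> x * mpow P n x y"]) (auto intro!: mult_nonneg_nonneg mpow_nonneg)
  also have "\<dots> = \<pi> y"
    using inv unfolding invariant_distribution_def by (intro sum_invariant_mpow) auto
  finally show ?thesis .
qed

text \<open>Irreducibility does not give a strictly positive power of \<open>P\<close> (periodic chains), but it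
  does for the lazy kernel \<open>Q = (I + P)/2\<close>, and \<open>h - Q h = g\<close> means \<open>h/2 - P(h/2) = g\<close>.\<close>

theorem poisson_equation_solvable:
  assumes st: "stochastic_matrix P" and irr: "irreducible_chain P" and inv: "invariant_distribution P \<pi>"
    and g: "(\<Sum>x\<in>UNIV. \<pi> x * g x) = 0"
  shows "\<exists>h. \<forall>x. h x - apply_kernel P h x = g x"
proof -
  obtain d where "\<And>x y. mpow (lazy_kernel P) d x y > 0" using mpow_lazy_kernel_pos[OF st irr] by blast
  then obtain h where h: "\<And>x. h x - apply_kernel (lazy_kernel P) h x = g x"
    using poisson_equation_solvable_if_mpow_pos[OF stochastic_lazy_kernel[OF st] _ _
        sum_invariant_lazy_kernel g] inv
    unfolding invariant_distribution_def by blast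
  have "apply_kernel P (\<lambda>y. h y / 2) x = apply_kernel P h x / 2" for x
    by (simp add: apply_kernel_def sum_divide_distrib)
  then have "h x / 2 - apply_kernel P (\<lambda>y. h y / 2) x = g x" for x
    using h[of x] apply_lazy_kernel[of P h x] by (simp add: field_simps)
  then show ?thesis by (intro exI[of _ "\<lambda>y. h y / 2"]) simp
qed

section \<open>An exponential inequality for martingales of the chain\<close>

lemma exp_le_quadratic:
  fixes t :: real
  assumes "\<bar>t\<bar> \<le> 1"
  shows "exp t \<le> 1 + t + t\<^sup>2"
proof (cases "t \<ge> 0")
  case False
  have "1 \<le> (1 + t + t\<^sup>2) * (1 - t)"
    using False mult_nonpos_nonneg[of t "t * t"]
    by (simp add: algebra_simps power2_eq_square power3_eq_cube)
  then have "1 / (1 - t) \<le> 1 + t + t\<^sup>2" using False by (simp add: divide_le_eq)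
  moreover have "exp t \<le> 1 / (1 - t)"
    using exp_ge_add_one_self[of "-t"] False by (simp add: exp_minus divide_left_mono field_simps)
  ultimately show ?thesis by linarith
qed (use assms exp_bound in auto)

lemma sum_exp_centered_le:
  fixes q z :: "'a::finite \<Rightarrow> real"
  assumes q: "\<And>y. q y \<ge> 0" "(\<Sum>y\<in>UNIV. q y) = 1" and z: "(\<Sum>y\<in>UNIV. q y * z y) = 0"
    and zc: "\<And>y. \<bar>z y\<bar> \<le> c" and l: "l \<ge> 0" "l * c \<le> 1"
  shows "(\<Sum>y\<in>UNIV. q y * exp (l * z y)) \<le> exp (l\<^sup>2 * c\<^sup>2)"
proof -
  have "exp (l * z y) \<le> 1 + l * z y + l\<^sup>2 * c\<^sup>2" for y
  proof -
    have "\<bar>l * z y\<bar> \<le> l * c" using zc[of y] l by (simp add: abs_mult mult_left_mono)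
    then have "exp (l * z y) \<le> 1 + l * z y + (l * z y)\<^sup>2" using l by (intro exp_le_quadratic) simp
    also have "(l * z y)\<^sup>2 \<le> l\<^sup>2 * c\<^sup>2"
      using zc[of y] l by (simp add: power_mult_distrib abs_le_square_iff[symmetric] mult_left_mono)
    finally show ?thesis by simp
  qed
  then have "(\<Sum>y\<in>UNIV. q y * exp (l * z y)) \<le> (\<Sum>y\<in>UNIV. q y * (1 + l * z y + l\<^sup>2 * c\<^sup>2))"
    by (intro sum_mono mult_left_mono q)
  also have "\<dots> = 1 + l\<^sup>2 * c\<^sup>2"
    using q z by (simp add: distrib_left sum.distrib sum_distrib_left[symmetric]
        sum_distrib_right[symmetric] mult_ac)
  also have "\<dots> \<le> exp (l\<^sup>2 * c\<^sup>2)" by (rule exp_ge_add_one_self)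
  finally show ?thesis .
qed

definition sup_norm :: "('a::finite \<Rightarrow> real) \<Rightarrow> real" where
  "sup_norm h = Max (range (\<lambda>x. \<bar>h x\<bar>))"

lemma abs_le_sup_norm: "\<bar>h x\<bar> \<le> sup_norm h"
  unfolding sup_norm_def by (rule Max_ge) auto

lemma sup_norm_nonneg: "sup_norm h \<ge> 0"
  using abs_le_sup_norm[of h undefined] by linarith

lemma sup_norm_uminus: "sup_norm (\<lambda>x. - h x) = sup_norm h"
  unfolding sup_norm_def by simp

lemma abs_diff_le_sup_norm: "\<bar>h a - h b\<bar> \<le> 2 * sup_norm h"
  using abs_le_sup_norm[of h a] abs_le_sup_norm[of h b] by linarith

lemma square_diff_le_sup_norm: "(h a - h b)\<^sup>2 \<le> (2 * sup_norm h)\<^sup>2"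
  using power_mono[OF abs_diff_le_sup_norm[of h a b] abs_ge_zero, of 2] by simp

lemma abs_apply_kernel_le:
  assumes "stochastic_matrix A"
  shows "\<bar>apply_kernel A h x\<bar> \<le> sup_norm h"
proof -
  have "\<bar>apply_kernel A h x\<bar> \<le> (\<Sum>y\<in>UNIV. A x y * sup_norm h)"
    unfolding apply_kernel_def using assms
    by (intro order_trans[OF sum_abs] sum_mono)
      (auto simp: abs_mult stochastic_matrix_def intro: mult_left_mono abs_le_sup_norm)
  also have "\<dots> = sup_norm h"
    using assms by (simp add: sum_distrib_right[symmetric] stochastic_matrix_def)
  finally show ?thesis .
qed

lemma sum_kernel_centered:
  assumes "stochastic_matrix A"
  shows "(\<Sum>y\<in>UNIV. A x y * (h y - apply_kernel A h x)) = 0"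
  using assms by (simp add: right_diff_distrib sum_subtractf apply_kernel_def
      sum_distrib_right[symmetric] stochastic_matrix_def)

context finite_markov_chain
begin

definition mart_diff :: "('a \<Rightarrow> real) \<Rightarrow> nat \<Rightarrow> (nat \<Rightarrow> 'a) \<Rightarrow> real" where
  "mart_diff h t x = h (x (Suc t)) - apply_kernel P h (x t)"

lemma abs_mart_diff_le: "\<bar>mart_diff h t x\<bar> \<le> 2 * sup_norm h"
  using abs_le_sup_norm[of h "x (Suc t)"] abs_apply_kernel_le[OF stochastic, of h "x t"]
    abs_triangle_ineq4[of "h (x (Suc t))" "apply_kernel P h (x t)"]
  unfolding mart_diff_def by linarith

lemma mart_diff_uminus: "mart_diff (\<lambda>z. - h z) t x = - mart_diff h t x"
  unfolding mart_diff_def by (simp add: apply_kernel_uminus)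

lemma sum_poisson_decomposition:
  assumes poisson: "\<And>u. h u - apply_kernel P h u = g u" and "a \<le> b"
  shows "(\<Sum>t\<in>{a..<b}. g (x t)) = (\<Sum>t\<in>{a..<b}. mart_diff h t x) + h (x a) - h (x b)"
proof -
  have "(\<Sum>t\<in>{a..<b}. g (x t)) = (\<Sum>t\<in>{a..<b}. mart_diff h t x + (h (x t) - h (x (Suc t))))"
    by (intro sum.cong) (auto simp: mart_diff_def poisson[symmetric])
  also have "\<dots> = (\<Sum>t\<in>{a..<b}. mart_diff h t x) - (\<Sum>t\<in>{a..<b}. h (x (Suc t)) - h (x t))"
    by (simp add: sum.distrib sum_subtractf)
  also have "(\<Sum>t\<in>{a..<b}. h (x (Suc t)) - h (x t)) = h (x b) - h (x a)"
    using sum_Suc_diff'[OF assms(2), of "\<lambda>t. h (x t)"] by simp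
  finally show ?thesis by simp
qed

lemma E_exp_mart_sum_le:
  assumes "1 \<le> a" "a \<le> b" "b \<le> m" and l: "l \<ge> 0" "l * (2 * sup_norm h + 1) \<le> 1"
  shows "E m (\<lambda>x. exp (l * (\<Sum>t\<in>{a..<b}. mart_diff h t x)))
    \<le> exp (l\<^sup>2 * (2 * sup_norm h + 1)\<^sup>2) ^ (b - a)"
  using assms(2,3)
proof (induction b rule: dec_induct)
  case base
  then show ?case using assms(1) by (simp add: E_const)
next
  case (step b)
  define c where "c = 2 * sup_norm h + 1"
  define F where "F x = exp (l * (\<Sum>t\<in>{a..<b}. mart_diff h t x))" for x
  have F: "depends_upto b F"
    using assms(1) unfolding depends_upto_def F_def mart_diff_def by (auto intro!: sum.cong)
  have kernel_bound: "(\<Sum>y\<in>UNIV. P u y * exp (l * (h y - apply_kernel P h u))) \<le> exp (l\<^sup>2 * c\<^sup>2)" for u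
  proof (rule sum_exp_centered_le[OF P_nonneg P_row_sum sum_kernel_centered[OF stochastic] _ l(1)])
    show "\<bar>h y - apply_kernel P h u\<bar> \<le> c" for y
      using abs_le_sup_norm[of h y] abs_apply_kernel_le[OF stochastic, of h u] unfolding c_def
      by linarith
  qed (use l(2) c_def in simp)
  have "E m (\<lambda>x. exp (l * (\<Sum>t\<in>{a..<Suc b}. mart_diff h t x)))
      = E m (\<lambda>x. F x * exp (l * (h (x (Suc b)) - apply_kernel P h (x b))))"
    using step.hyps by (simp add: F_def mart_diff_def distrib_left exp_add)
  also have "\<dots> = E m (\<lambda>x. F x * (\<Sum>y\<in>UNIV. P (x b) y * exp (l * (h y - apply_kernel P h (x b)))))"
    using step assms(1) F by (intro E_markov_step) auto
  also have "\<dots> \<le> E m (\<lambda>x. F x * exp (l\<^sup>2 * c\<^sup>2))"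
    by (intro E_mono mult_left_mono kernel_bound) (simp add: F_def)
  also have "\<dots> \<le> exp (l\<^sup>2 * c\<^sup>2) ^ (b - a) * exp (l\<^sup>2 * c\<^sup>2)"
    unfolding E_cmult_right using step.IH step.prems unfolding F_def c_def
    by (intro mult_right_mono) auto
  also have "\<dots> = exp (l\<^sup>2 * c\<^sup>2) ^ (Suc b - a)"
    using step.hyps by (simp add: Suc_diff_le)
  finally show ?case unfolding c_def .
qed

lemma E_mart_sum_tail_le_exp:
  assumes "1 \<le> a" "a \<le> b" "b \<le> m" and l: "l \<ge> 0" "l * (2 * sup_norm h + 1) \<le> 1"
  shows "E m (\<lambda>x. of_bool (y \<le> (\<Sum>t\<in>{a..<b}. mart_diff h t x)))
    \<le> exp (real (b - a) * l\<^sup>2 * (2 * sup_norm h + 1)\<^sup>2 - l * y)"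
proof -
  let ?D = "\<lambda>x. \<Sum>t\<in>{a..<b}. mart_diff h t x"
  have "E m (\<lambda>x. of_bool (y \<le> ?D x)) \<le> E m (\<lambda>x. exp (l * ?D x) * exp (- l * y))"
    using l(1) by (intro E_mono) (auto simp: exp_add[symmetric] algebra_simps mult_left_mono)
  also have "\<dots> \<le> exp (l\<^sup>2 * (2 * sup_norm h + 1)\<^sup>2) ^ (b - a) * exp (- l * y)"
    unfolding E_cmult_right using E_exp_mart_sum_le[OF assms] by (intro mult_right_mono) auto
  also have "\<dots> = exp (real (b - a) * l\<^sup>2 * (2 * sup_norm h + 1)\<^sup>2 - l * y)"
    by (simp add: exp_of_nat_mult[symmetric] exp_add[symmetric] mult_ac)
  finally show ?thesis .
qed

text \<open>Chernoff's bound with the optimal \<open>\<lambda> = y / (2 L c\<^sup>2)\<close>; large \<open>y\<close> are excluded by the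
  bounded increments, which makes the restriction \<open>\<lambda> c \<le> 1\<close> harmless.\<close>

lemma E_mart_sum_tail_le:
  assumes ab: "1 \<le> a" "a \<le> b" "b \<le> m" and y: "y > 0"
  shows "E m (\<lambda>x. of_bool (y \<le> (\<Sum>t\<in>{a..<b}. mart_diff h t x)))
    \<le> exp (- (y\<^sup>2) / (4 * real (b - a) * (2 * sup_norm h + 1)\<^sup>2))"
proof -
  define c where "c = 2 * sup_norm h + 1"
  define L where "L = real (b - a)"
  have c1: "c \<ge> 1" unfolding c_def using sup_norm_nonneg[of h] by simp
  show ?thesis
  proof (cases "y \<le> 2 * L * c")
    case False
    have "(\<Sum>t\<in>{a..<b}. mart_diff h t x) \<le> L * (2 * sup_norm h)" for x
      using sum_mono[of "{a..<b}" "\<lambda>t. mart_diff h t x" "\<lambda>_. 2 * sup_norm h"] abs_mart_diff_le[of h]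
      unfolding L_def by (simp add: abs_le_iff)
    moreover have "L * (2 * sup_norm h) \<le> 2 * L * c"
      unfolding c_def L_def using sup_norm_nonneg[of h] by (simp add: algebra_simps)
    ultimately have "\<not> y \<le> (\<Sum>t\<in>{a..<b}. mart_diff h t x)" for x
      using False by (meson order_trans)
    then show ?thesis by (simp add: E_zero)
  next
    case True
    then have "0 < 2 * L * c" using y by linarith
    then have L: "L > 0" using c1 by (simp add: zero_less_mult_iff)
    define l where "l = y / (2 * L * c\<^sup>2)"
    have l: "l \<ge> 0" "l * c \<le> 1"
      using y L c1 True unfolding l_def by (auto simp: power2_eq_square field_simps)
    have "L * l\<^sup>2 * c\<^sup>2 - l * y = - (y\<^sup>2) / (4 * L * c\<^sup>2)"
      using L c1 unfolding l_def by (simp add: field_simps power2_eq_square)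
    then show ?thesis
      using E_mart_sum_tail_le_exp[OF ab l(1), of h y] l(2) unfolding c_def L_def by simp
  qed
qed

lemma of_bool_abs_add_le:
  fixes S d y c :: real
  assumes "\<bar>d\<bar> \<le> c"
  shows "of_bool (y + c \<le> \<bar>S + d\<bar>) \<le> (of_bool (y \<le> S) + of_bool (y \<le> - S) :: real)"
  using assms by (auto simp: abs_le_iff abs_if split: if_split_asm)

text \<open>Sub-Gaussian tails for additive functionals \<open>\<Sum> g(X\<^sub>t)\<close>, through the martingale of a
  solution \<open>h\<close> of the Poisson equation for \<open>g\<close>; the boundary terms cost \<open>2 \<parallel>h\<parallel>\<close>.\<close>

lemma E_additive_tail_le:
  assumes poisson: "\<And>x. h x - apply_kernel P h x = g x"
    and ab: "1 \<le> a" "a \<le> b" "b \<le> m" and y: "y > 0"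
  shows "E m (\<lambda>x. of_bool (y + 2 * sup_norm h \<le> \<bar>\<Sum>t\<in>{a..<b}. g (x t)\<bar>))
    \<le> 2 * exp (- (y\<^sup>2) / (4 * real (b - a) * (2 * sup_norm h + 1)\<^sup>2))"
proof -
  let ?D = "\<lambda>h x. \<Sum>t\<in>{a..<b}. mart_diff h t x"
  have "of_bool (y + 2 * sup_norm h \<le> \<bar>\<Sum>t\<in>{a..<b}. g (x t)\<bar>)
      \<le> (of_bool (y \<le> ?D h x) + of_bool (y \<le> ?D (\<lambda>z. - h z) x) :: real)" for x
    using of_bool_abs_add_le[OF abs_diff_le_sup_norm[of h "x a" "x b"], of y "?D h x"]
    unfolding sum_poisson_decomposition[OF poisson ab(2)] mart_diff_uminus sum_negf
    by (simp add: add_diff_eq)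
  then have "E m (\<lambda>x. of_bool (y + 2 * sup_norm h \<le> \<bar>\<Sum>t\<in>{a..<b}. g (x t)\<bar>))
      \<le> E m (\<lambda>x. of_bool (y \<le> ?D h x)) + E m (\<lambda>x. of_bool (y \<le> ?D (\<lambda>z. - h z) x))"
    unfolding E_add[symmetric] by (rule E_mono)
  also have "\<dots> \<le> 2 * exp (- (y\<^sup>2) / (4 * real (b - a) * (2 * sup_norm h + 1)\<^sup>2))"
    using E_mart_sum_tail_le[OF ab y, of h] E_mart_sum_tail_le[OF ab y, of "\<lambda>z. - h z"]
    by (simp add: sup_norm_uminus)
  finally show ?thesis .
qed

end

section \<open>Variances of bounded random variables\<close>

definition bounded_rv :: "'b measure \<Rightarrow> ('b \<Rightarrow> real) \<Rightarrow> bool" where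
  "bounded_rv M A \<longleftrightarrow> A \<in> borel_measurable M \<and> (\<exists>K. \<forall>\<omega>\<in>space M. \<bar>A \<omega>\<bar> \<le> K)"

context prob_space
begin

lemma integrable_bounded_rv: "bounded_rv M A \<Longrightarrow> integrable M A"
  unfolding bounded_rv_def by (auto intro!: AE_I2 integrable_const_bound)

lemma bounded_rv_const: "bounded_rv M (\<lambda>_. c)"
  unfolding bounded_rv_def by auto

lemma bounded_rv_add: "bounded_rv M A \<Longrightarrow> bounded_rv M B \<Longrightarrow> bounded_rv M (\<lambda>\<omega>. A \<omega> + B \<omega>)"
  unfolding bounded_rv_def
  by (auto intro!: exI[of _ "K1 + K2" for K1 K2] order_trans[OF abs_triangle_ineq] add_mono)

lemma bounded_rv_mult: "bounded_rv M A \<Longrightarrow> bounded_rv M B \<Longrightarrow> bounded_rv M (\<lambda>\<omega>. A \<omega> * B \<omega>)"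
  unfolding bounded_rv_def
  by (auto simp: abs_mult intro!: exI[of _ "K1 * K2" for K1 K2] mult_mono)

lemma bounded_rv_diff: "bounded_rv M A \<Longrightarrow> bounded_rv M B \<Longrightarrow> bounded_rv M (\<lambda>\<omega>. A \<omega> - B \<omega>)"
  using bounded_rv_add[of A "\<lambda>\<omega>. (-1) * B \<omega>"] bounded_rv_mult[OF bounded_rv_const, of B "-1"] by simp

lemma integrable_bounded_rv_square: "bounded_rv M A \<Longrightarrow> integrable M (\<lambda>\<omega>. (A \<omega>)\<^sup>2)"
  using bounded_rv_mult[of A A] by (simp add: power2_eq_square integrable_bounded_rv)

lemma variance_bounded_rv:
  "bounded_rv M A \<Longrightarrow> variance A = expectation (\<lambda>\<omega>. (A \<omega>)\<^sup>2) - (expectation A)\<^sup>2"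
  by (intro variance_eq integrable_bounded_rv integrable_bounded_rv_square)

lemma variance_le_expectation_square: "bounded_rv M A \<Longrightarrow> variance A \<le> expectation (\<lambda>\<omega>. (A \<omega>)\<^sup>2)"
  using variance_bounded_rv by simp

lemma variance_scale_shift:
  assumes "bounded_rv M A"
  shows "variance (\<lambda>\<omega>. a * A \<omega> + b) = a\<^sup>2 * variance A"
proof -
  have "expectation (\<lambda>\<omega>. a * A \<omega> + b) = a * expectation A + b"
    using integrable_bounded_rv[OF assms] by (simp add: prob_space)
  then have "variance (\<lambda>\<omega>. a * A \<omega> + b) = expectation (\<lambda>\<omega>. a\<^sup>2 * (A \<omega> - expectation A)\<^sup>2)"
    by (intro arg_cong[where f=expectation] ext) (simp add: power2_eq_square algebra_simps)
  then show ?thesis by simp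
qed

lemma abs_expectation_mult_le:
  assumes A: "bounded_rv M A" and B: "bounded_rv M B"
  shows "\<bar>expectation (\<lambda>\<omega>. A \<omega> * B \<omega>)\<bar>
    \<le> sqrt (expectation (\<lambda>\<omega>. (A \<omega>)\<^sup>2) * expectation (\<lambda>\<omega>. (B \<omega>)\<^sup>2))"
proof -
  define a where "a = expectation (\<lambda>\<omega>. (A \<omega>)\<^sup>2)"
  define b where "b = expectation (\<lambda>\<omega>. (B \<omega>)\<^sup>2)"
  define c where "c = expectation (\<lambda>\<omega>. A \<omega> * B \<omega>)"
  have quadratic: "0 \<le> s\<^sup>2 * a - 2 * s * c + b" for s
  proof -
    have "0 \<le> expectation (\<lambda>\<omega>. (s * A \<omega> - B \<omega>)\<^sup>2)" by simp
    also have "(\<lambda>\<omega>. (s * A \<omega> - B \<omega>)\<^sup>2) = (\<lambda>\<omega>. s\<^sup>2 * (A \<omega>)\<^sup>2 - 2 * s * (A \<omega> * B \<omega>) + (B \<omega>)\<^sup>2)"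
      by (auto simp: power2_eq_square algebra_simps)
    also have "expectation \<dots> = s\<^sup>2 * a - 2 * s * c + b"
      unfolding a_def b_def c_def
      using integrable_bounded_rv_square[OF A] integrable_bounded_rv_square[OF B]
        integrable_bounded_rv[OF bounded_rv_mult[OF A B]] by simp
    finally show ?thesis .
  qed
  have "c\<^sup>2 \<le> a * b"
  proof (cases "a = 0")
    case True
    have "c = 0"
    proof (rule ccontr)
      assume "c \<noteq> 0"
      then have "-1 \<ge> (0::real)"
        using quadratic[of "(b + 1) / (2 * c)"] True by (simp add: field_simps)
      then show False by simp
    qed
    then show ?thesis using True by simp
  next
    case False
    then have "a > 0" unfolding a_def by (simp add: order.not_eq_order_implies_strict)
    moreover have "0 \<le> (c / a)\<^sup>2 * a - 2 * (c / a) * c + b" by (rule quadratic)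
    ultimately show ?thesis by (simp add: field_simps power2_eq_square)
  qed
  then have "sqrt (c\<^sup>2) \<le> sqrt (a * b)" by (rule real_sqrt_le_mono)
  then show ?thesis unfolding a_def b_def c_def by simp
qed

text \<open>Writing \<open>A = B + (A - B)\<close>, the cross term is controlled by Cauchy-Schwarz.\<close>

lemma abs_variance_diff_le:
  assumes A: "bounded_rv M A" and B: "bounded_rv M B"
  shows "\<bar>variance A - variance B\<bar>
    \<le> variance (\<lambda>\<omega>. A \<omega> - B \<omega>) + 2 * sqrt (variance B * variance (\<lambda>\<omega>. A \<omega> - B \<omega>))"
proof -
  define b where "b \<omega> = B \<omega> - expectation B" for \<omega>
  define c where "c \<omega> = (A \<omega> - B \<omega>) - expectation (\<lambda>\<omega>. A \<omega> - B \<omega>)" for \<omega>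
  have bb: "bounded_rv M b" unfolding b_def by (intro bounded_rv_diff B bounded_rv_const)
  have cb: "bounded_rv M c" unfolding c_def by (intro bounded_rv_diff A B bounded_rv_const)
  have EAB: "expectation (\<lambda>\<omega>. A \<omega> - B \<omega>) = expectation A - expectation B"
    using A B by (simp add: integrable_bounded_rv)
  have "variance A = expectation (\<lambda>\<omega>. (b \<omega>)\<^sup>2 + 2 * (b \<omega> * c \<omega>) + (c \<omega>)\<^sup>2)"
    unfolding b_def c_def EAB by (intro arg_cong[where f=expectation] ext) (simp add: power2_eq_square algebra_simps)
  also have "\<dots> = variance B + 2 * expectation (\<lambda>\<omega>. b \<omega> * c \<omega>) + variance (\<lambda>\<omega>. A \<omega> - B \<omega>)"
    using integrable_bounded_rv_square[OF bb] integrable_bounded_rv_square[OF cb]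
      integrable_bounded_rv[OF bounded_rv_mult[OF bb cb]]
    by (simp add: b_def c_def)
  finally have "variance A = variance B + 2 * expectation (\<lambda>\<omega>. b \<omega> * c \<omega>) + variance (\<lambda>\<omega>. A \<omega> - B \<omega>)" .
  moreover have "\<bar>expectation (\<lambda>\<omega>. b \<omega> * c \<omega>)\<bar> \<le> sqrt (variance B * variance (\<lambda>\<omega>. A \<omega> - B \<omega>))"
    using abs_expectation_mult_le[OF bb cb] unfolding b_def c_def by simp
  moreover have "variance (\<lambda>\<omega>. A \<omega> - B \<omega>) \<ge> 0" by (rule variance_positive)
  ultimately show ?thesis unfolding abs_le_iff by (intro conjI; linarith)
qed

lemma tendsto_scaled_variance_perturb:
  assumes A: "\<And>n. bounded_rv M (A n)" and B: "\<And>n. bounded_rv M (B n)" and c: "\<And>n. c n \<ge> 0"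
    and LB: "(\<lambda>n. c n * variance (B n)) \<longlonglongrightarrow> L"
    and LC: "(\<lambda>n. c n * variance (\<lambda>\<omega>. A n \<omega> - B n \<omega>)) \<longlonglongrightarrow> 0"
  shows "(\<lambda>n. c n * variance (A n)) \<longlonglongrightarrow> L"
proof -
  define VB where "VB n = c n * variance (B n)" for n
  define VC where "VC n = c n * variance (\<lambda>\<omega>. A n \<omega> - B n \<omega>)" for n
  have bound: "\<bar>c n * variance (A n) - VB n\<bar> \<le> VC n + 2 * sqrt (VB n * VC n)" for n
  proof -
    have "\<bar>c n * variance (A n) - VB n\<bar> = c n * \<bar>variance (A n) - variance (B n)\<bar>"
      unfolding VB_def using c[of n] by (simp add: abs_mult right_diff_distrib[symmetric])
    also have "\<dots> \<le> c n * (variance (\<lambda>\<omega>. A n \<omega> - B n \<omega>)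
        + 2 * sqrt (variance (B n) * variance (\<lambda>\<omega>. A n \<omega> - B n \<omega>)))"
      by (intro mult_left_mono abs_variance_diff_le A B c)
    also have "\<dots> = VC n + 2 * (c n * sqrt (variance (B n) * variance (\<lambda>\<omega>. A n \<omega> - B n \<omega>)))"
      unfolding VC_def by (simp add: algebra_simps)
    also have "c n * sqrt (variance (B n) * variance (\<lambda>\<omega>. A n \<omega> - B n \<omega>)) = sqrt (VB n * VC n)"
    proof -
      have "VB n * VC n = (c n)\<^sup>2 * (variance (B n) * variance (\<lambda>\<omega>. A n \<omega> - B n \<omega>))"
        unfolding VB_def VC_def by (simp add: power2_eq_square mult_ac)
      then have "sqrt (VB n * VC n)
          = sqrt ((c n)\<^sup>2) * sqrt (variance (B n) * variance (\<lambda>\<omega>. A n \<omega> - B n \<omega>))"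
        by (simp only: real_sqrt_mult)
      also have "sqrt ((c n)\<^sup>2) = c n" using c[of n] by simp
      finally show ?thesis by (rule sym)
    qed
    finally show ?thesis .
  qed
  have "(\<lambda>n. VC n + 2 * sqrt (VB n * VC n)) \<longlonglongrightarrow> 0 + 2 * sqrt (L * 0)"
    unfolding VB_def VC_def by (intro tendsto_add tendsto_mult tendsto_const tendsto_real_sqrt LB LC)
  then have "(\<lambda>n. VC n + 2 * sqrt (VB n * VC n)) \<longlonglongrightarrow> 0" by simp
  then have "(\<lambda>n. c n * variance (A n) - VB n) \<longlonglongrightarrow> 0"
    by (rule Lim_null_comparison[rotated]) (intro always_eventually allI, simp add: bound)
  from tendsto_add[OF this LB[folded VB_def]] show ?thesis by simp
qed

end

section \<open>Asymptotic variance of ergodic averages\<close>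

context finite_markov_chain
begin

lemma bounded_rv_path_function:
  assumes "m \<ge> 1" "depends_upto m G"
  shows "bounded_rv M (\<lambda>\<omega>. G (\<lambda>i. X i \<omega>))"
  unfolding bounded_rv_def
  using borel_measurable_integrable[OF integrable_path_function[OF assms]]
    path_function_bounded[OF assms(2)] by blast

lemma variance_path_function:
  assumes "m \<ge> 1" "depends_upto m G"
  shows "variance (\<lambda>\<omega>. G (\<lambda>i. X i \<omega>)) = E m (\<lambda>x. (G x)\<^sup>2) - (E m G)\<^sup>2"
  using variance_bounded_rv[OF bounded_rv_path_function[OF assms]]
    expectation_path_function[OF assms] expectation_path_function[OF assms(1) depends_upto_comp[OF assms(2)]]
  by simp

lemma E_mart_diff: "1 \<le> t \<Longrightarrow> t < m \<Longrightarrow> E m (mart_diff h t) = 0"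
  using E_markov_step_single[of t m "\<lambda>u v. h v - apply_kernel P h u"]
  by (simp add: mart_diff_def[abs_def] sum_kernel_centered[OF stochastic] E_zero)

definition increment_variance :: "('a \<Rightarrow> real) \<Rightarrow> 'a \<Rightarrow> real" where
  "increment_variance h u = (\<Sum>y\<in>UNIV. P u y * (h y - apply_kernel P h u)\<^sup>2)"

definition mart_sum :: "('a \<Rightarrow> real) \<Rightarrow> nat \<Rightarrow> (nat \<Rightarrow> 'a) \<Rightarrow> real" where
  "mart_sum h n x = (\<Sum>t\<in>{1..n}. mart_diff h t x)"

lemma depends_upto_mart_sum: "depends_upto (Suc n) (mart_sum h n)"
  unfolding depends_upto_def mart_sum_def mart_diff_def by (auto intro!: sum.cong)

lemma E_mart_sum: "Suc n \<le> m \<Longrightarrow> E m (mart_sum h n) = 0"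
  unfolding mart_sum_def E_sum by (intro sum.neutral) (auto intro!: E_mart_diff)

text \<open>Martingale increments are orthogonal, so the second moment is the sum of the conditional
  variances.\<close>

lemma E_mart_sum_square:
  "Suc n \<le> m \<Longrightarrow> E m (\<lambda>x. (mart_sum h n x)\<^sup>2) = (\<Sum>t\<in>{1..n}. E m (\<lambda>x. increment_variance h (x t)))"
proof (induction n)
  case 0
  then show ?case by (simp add: mart_sum_def E_zero)
next
  case (Suc n)
  have square: "(mart_sum h (Suc n) x)\<^sup>2
      = (mart_sum h n x)\<^sup>2 + 2 * mart_sum h n x * mart_diff h (Suc n) x + (mart_diff h (Suc n) x)\<^sup>2" for x
    by (simp add: mart_sum_def power2_eq_square algebra_simps)
  have "depends_upto (Suc n) (\<lambda>x. 2 * mart_sum h n x)"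
    by (rule depends_upto_comp[OF depends_upto_mart_sum])
  then have "E m (\<lambda>x. 2 * mart_sum h n x * mart_diff h (Suc n) x)
      = E m (\<lambda>x. 2 * mart_sum h n x * (\<Sum>y\<in>UNIV. P (x (Suc n)) y * (h y - apply_kernel P h (x (Suc n)))))"
    using E_markov_step[of "Suc n" m _ "\<lambda>u v. h v - apply_kernel P h u"] Suc.prems
    by (simp add: mart_diff_def)
  then have cross: "E m (\<lambda>x. 2 * mart_sum h n x * mart_diff h (Suc n) x) = 0"
    by (simp add: sum_kernel_centered[OF stochastic] E_zero)
  have "E m (\<lambda>x. (mart_diff h (Suc n) x)\<^sup>2) = E m (\<lambda>x. increment_variance h (x (Suc n)))"
    using E_markov_step_single[of "Suc n" m "\<lambda>u v. (h v - apply_kernel P h u)\<^sup>2"] Suc.prems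
    by (simp add: mart_diff_def increment_variance_def)
  then show ?case
    unfolding square E_add cross using Suc by simp
qed

lemma variance_mart_sum:
  "variance (\<lambda>\<omega>. mart_sum h n (\<lambda>i. X i \<omega>)) = (\<Sum>t\<in>{1..n}. E (Suc n) (\<lambda>x. increment_variance h (x t)))"
  using variance_path_function[OF _ depends_upto_mart_sum, of n h] E_mart_sum[of n "Suc n" h]
    E_mart_sum_square[of n "Suc n" h] by simp

lemma variance_additive_minus_mart_sum_le:
  assumes poisson: "\<And>x. h x - apply_kernel P h x = g x"
  shows "variance (\<lambda>\<omega>. (\<Sum>t\<in>{1..n}. g (X t \<omega>)) - mart_sum h n (\<lambda>i. X i \<omega>)) \<le> (2 * sup_norm h)\<^sup>2"
proof -
  have diff: "(\<Sum>t\<in>{1..n}. g (X t \<omega>)) - mart_sum h n (\<lambda>i. X i \<omega>) = h (X 1 \<omega>) - h (X (Suc n) \<omega>)" for \<omega>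
    using sum_poisson_decomposition[OF poisson, of 1 "Suc n" "\<lambda>i. X i \<omega>"]
    unfolding mart_sum_def by (simp add: atLeastLessThanSuc_atLeastAtMost)
  have bounded: "bounded_rv M (\<lambda>\<omega>. h (X 1 \<omega>) - h (X (Suc n) \<omega>))"
    using bounded_rv_path_function[of "Suc n" "\<lambda>x. h (x 1) - h (x (Suc n))"]
    unfolding depends_upto_def by simp
  have "variance (\<lambda>\<omega>. h (X 1 \<omega>) - h (X (Suc n) \<omega>)) \<le> expectation (\<lambda>\<omega>. (h (X 1 \<omega>) - h (X (Suc n) \<omega>))\<^sup>2)"
    by (rule variance_le_expectation_square[OF bounded])
  also have "\<dots> \<le> expectation (\<lambda>_. (2 * sup_norm h)\<^sup>2)"
    using integrable_bounded_rv_square[OF bounded] by (intro integral_mono square_diff_le_sup_norm) auto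
  finally show ?thesis unfolding diff by (simp add: prob_space)
qed

end

lemma tendsto_scaled_if_bounded_deviation:
  fixes a :: "nat \<Rightarrow> real"
  assumes "\<And>n. \<bar>a n - real n * c\<bar> \<le> K"
  shows "(\<lambda>n. 1 / real n * a n) \<longlonglongrightarrow> c"
proof -
  have "norm (1 / real n * a n - c) \<le> K * (1 / real n)" if "n \<ge> 1" for n
    using assms[of n] that by (simp add: field_simps abs_divide divide_right_mono)
  then have "\<forall>\<^sub>F n in sequentially. norm (1 / real n * a n - c) \<le> K * (1 / real n)"
    by (rule eventually_mono[OF eventually_ge_at_top[of 1]])
  moreover have "(\<lambda>n. K * (1 / real n)) \<longlonglongrightarrow> 0"
    by (intro tendsto_mult_right_zero lim_const_over_n)
  ultimately have "(\<lambda>n. 1 / real n * a n - c) \<longlonglongrightarrow> 0"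
    by (rule Lim_null_comparison)
  then show ?thesis by (simp add: LIM_zero_iff)
qed

locale ergodic_markov_chain = finite_markov_chain M X p0 P
  for M :: "'b measure" and X :: "nat \<Rightarrow> 'b \<Rightarrow> 'a::finite" and p0 P +
  fixes \<pi> :: "'a \<Rightarrow> real"
  assumes irreducible: "irreducible_chain P" and invariant: "invariant_distribution P \<pi>"
begin

lemma poisson_equation:
  "(\<Sum>x\<in>UNIV. \<pi> x * g x) = 0 \<Longrightarrow> \<exists>h. \<forall>x. h x - apply_kernel P h x = g x"
  using poisson_equation_solvable[OF stochastic irreducible invariant] by blast

lemma invariant_pos: "\<pi> y > 0"
  using invariant_distribution_pos[OF stochastic irreducible invariant] .

lemma sum_invariant: "(\<Sum>x\<in>UNIV. \<pi> x) = 1"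
  using invariant unfolding invariant_distribution_def prob_vector_def by auto

lemma sum_invariant_centered: "(\<Sum>x\<in>UNIV. \<pi> x * (v x - (\<Sum>u\<in>UNIV. \<pi> u * v u))) = 0"
  by (simp add: right_diff_distrib sum_subtractf sum_distrib_right[symmetric] sum_invariant)

text \<open>The expected additive functional deviates from its stationary value by at most the
  boundary terms of the Poisson decomposition.\<close>

lemma bounded_E_additive_deviation:
  "\<exists>K. \<forall>n m. Suc n \<le> m \<longrightarrow>
     \<bar>E m (\<lambda>x. \<Sum>t\<in>{1..n}. v (x t)) - real n * (\<Sum>u\<in>UNIV. \<pi> u * v u)\<bar> \<le> K"
proof -
  define c where "c = (\<Sum>u\<in>UNIV. \<pi> u * v u)"
  obtain h where h: "\<And>x. h x - apply_kernel P h x = v x - c"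
    using poisson_equation[OF sum_invariant_centered] unfolding c_def by blast
  have "\<bar>E m (\<lambda>x. \<Sum>t\<in>{1..n}. v (x t)) - real n * c\<bar> \<le> 2 * sup_norm h" if nm: "Suc n \<le> m" for n m
  proof -
    have "(\<Sum>t\<in>{1..n}. v (x t)) - real n * c = mart_sum h n x + (h (x 1) - h (x (Suc n)))" for x
      using sum_poisson_decomposition[OF h, of 1 "Suc n" x]
      by (simp add: mart_sum_def sum_subtractf atLeastLessThanSuc_atLeastAtMost)
    then have "E m (\<lambda>x. (\<Sum>t\<in>{1..n}. v (x t)) - real n * c)
        = E m (mart_sum h n) + E m (\<lambda>x. h (x 1) - h (x (Suc n)))"
      by (simp only: E_add)
    then have "E m (\<lambda>x. \<Sum>t\<in>{1..n}. v (x t)) - real n * c = E m (\<lambda>x. h (x 1) - h (x (Suc n)))"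
      using E_const[of m "real n * c"] E_mart_sum[OF nm, of h] nm by (simp add: E_diff)
    moreover have "\<bar>E m (\<lambda>x. h (x 1) - h (x (Suc n)))\<bar> \<le> 2 * sup_norm h"
      using E_mono[of "\<lambda>x. h (x 1) - h (x (Suc n))" "\<lambda>_. 2 * sup_norm h" m]
        E_mono[of "\<lambda>x. h (x (Suc n)) - h (x 1)" "\<lambda>_. 2 * sup_norm h" m]
        abs_diff_le_sup_norm[of h] E_const[of m] E_diff[of m] nm
      by (simp add: abs_le_iff)
    ultimately show ?thesis by simp
  qed
  then show ?thesis unfolding c_def by blast
qed

text \<open>The martingale part of \<open>\<Sum>\<^sub>t\<^sub>\<le>\<^sub>n g(X\<^sub>t)\<close> has variance \<open>n \<sigma>\<^sup>2 + O(1)\<close>, where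
  \<open>\<sigma>\<^sup>2 = \<Sum>\<^sub>u \<pi>(u) Var(h(X\<^sub>2) | X\<^sub>1 = u)\<close>; the rest is bounded.\<close>

theorem scaled_variance_additive_convergent:
  assumes g: "(\<Sum>x\<in>UNIV. \<pi> x * g x) = 0"
  shows "\<exists>L. (\<lambda>n. 1 / real n * variance (\<lambda>\<omega>. \<Sum>t\<in>{1..n}. g (X t \<omega>))) \<longlonglongrightarrow> L"
proof -
  obtain h where h: "\<And>x. h x - apply_kernel P h x = g x" using poisson_equation[OF g] by blast
  define A where "A n \<omega> = (\<Sum>t\<in>{1..n}. g (X t \<omega>))" for n \<omega>
  define B where "B n \<omega> = mart_sum h n (\<lambda>i. X i \<omega>)" for n \<omega>
  have A: "bounded_rv M (A n)" for n
    using bounded_rv_path_function[of "Suc n" "\<lambda>x. \<Sum>t\<in>{1..n}. g (x t)"]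
    unfolding A_def depends_upto_def by simp
  have B: "bounded_rv M (B n)" for n
    unfolding B_def by (rule bounded_rv_path_function[OF _ depends_upto_mart_sum]) simp
  obtain K where "\<And>n. \<bar>variance (B n) - real n * (\<Sum>u\<in>UNIV. \<pi> u * increment_variance h u)\<bar> \<le> K"
    using bounded_E_additive_deviation[of "increment_variance h"]
    unfolding B_def variance_mart_sum E_sum[symmetric] by blast
  then have "(\<lambda>n. 1 / real n * variance (B n)) \<longlonglongrightarrow> (\<Sum>u\<in>UNIV. \<pi> u * increment_variance h u)"
    by (rule tendsto_scaled_if_bounded_deviation)
  moreover have "(\<lambda>n. 1 / real n * variance (\<lambda>\<omega>. A n \<omega> - B n \<omega>)) \<longlonglongrightarrow> 0"
    using variance_additive_minus_mart_sum_le[OF h] variance_positive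
    unfolding A_def B_def by (intro tendsto_scaled_if_bounded_deviation[where K="(2 * sup_norm h)\<^sup>2"]) simp
  ultimately have "(\<lambda>n. 1 / real n * variance (A n)) \<longlonglongrightarrow> (\<Sum>u\<in>UNIV. \<pi> u * increment_variance h u)"
    by (intro tendsto_scaled_variance_perturb[OF A B]) simp_all
  then show ?thesis unfolding A_def by blast
qed

lemma mu_hat_scaled_variance_convergent:
  "\<exists>L. (\<lambda>n. real n * variance (mu_hat f X n)) \<longlonglongrightarrow> L"
proof -
  define \<mu> where "\<mu> = (\<Sum>u\<in>UNIV. \<pi> u * f u)"
  define A where "A n \<omega> = (\<Sum>t\<in>{1..n}. f (X t \<omega>) - \<mu>)" for n \<omega>
  obtain L where "(\<lambda>n. 1 / real n * variance (A n)) \<longlonglongrightarrow> L"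
    using scaled_variance_additive_convergent[OF sum_invariant_centered[of f]]
    unfolding A_def \<mu>_def by blast
  moreover have "real n * variance (mu_hat f X n) = 1 / real n * variance (A n)" for n
  proof (cases "n = 0")
    case False
    have "bounded_rv M (A n)"
      using bounded_rv_path_function[of "Suc n" "\<lambda>x. \<Sum>t\<in>{1..n}. f (x t) - \<mu>"]
      unfolding A_def depends_upto_def by simp
    moreover have "mu_hat f X n = (\<lambda>\<omega>. 1 / real n * A n \<omega> + \<mu>)"
      using False by (simp add: fun_eq_iff mu_hat_def A_def sum_subtractf field_simps)
    ultimately have "variance (mu_hat f X n) = (1 / real n)\<^sup>2 * variance (A n)"
      by (simp only: variance_scale_shift)
    then show ?thesis by (simp add: power2_eq_square)
  qed simp
  ultimately show ?thesis by auto
qed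

end

section \<open>Visits to \<open>S\<close> and the times \<open>N(k)\<close>\<close>

lemma of_nat_visits: "real (visits S X n \<omega>) = (\<Sum>t\<in>{1..n}. of_bool (X t \<omega> \<in> S))"
  unfolding visits_def by (simp add: Int_def)

lemma visits_Suc: "visits S X (Suc j) \<omega> = visits S X j \<omega> + of_bool (X (Suc j) \<omega> \<in> S)"
proof -
  have "real (visits S X (Suc j) \<omega>) = real (visits S X j \<omega> + of_bool (X (Suc j) \<omega> \<in> S))"
    by (simp add: of_nat_visits)
  then show ?thesis by (simp only: of_nat_eq_iff)
qed

lemma visits_mono: "i \<le> j \<Longrightarrow> visits S X i \<omega> \<le> visits S X j \<omega>"
  unfolding visits_def by (intro card_mono) auto

lemma visits_attains: "k \<le> visits S X m \<omega> \<Longrightarrow> \<exists>j\<le>m. visits S X j \<omega> = k"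
proof (induction m)
  case 0
  then show ?case by (simp add: visits_def)
next
  case (Suc m)
  show ?case
  proof (cases "k \<le> visits S X m \<omega>")
    case True
    then show ?thesis using Suc.IH le_Suc_eq by blast
  next
    case False
    then have "k = visits S X (Suc m) \<omega>" using Suc.prems unfolding visits_Suc by (cases "X (Suc m) \<omega> \<in> S") auto
    then show ?thesis by blast
  qed
qed

lemma hitN_between:
  assumes "k \<le> visits S X m1 \<omega>" and "visits S X m0 \<omega> < k"
  shows "m0 < hitN S X k \<omega>" "hitN S X k \<omega> \<le> m1" "visits S X (hitN S X k \<omega>) \<omega> = k"
proof -
  obtain j where j: "j \<le> m1" "visits S X j \<omega> = k" using visits_attains[OF assms(1)] by blast
  show visits_hitN: "visits S X (hitN S X k \<omega>) \<omega> = k"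
    unfolding hitN_def by (rule LeastI[of _ j]) (rule j(2))
  have "hitN S X k \<omega> \<le> j" unfolding hitN_def by (rule Least_le) (rule j(2))
  then show "hitN S X k \<omega> \<le> m1" using j(1) by simp
  show "m0 < hitN S X k \<omega>"
    using visits_mono[of "hitN S X k \<omega>" m0 S X \<omega>] visits_hitN assms(2) by linarith
qed

lemma abs_ratio_diff_le:
  fixes SN Sn B A W :: real and N n :: nat
  assumes n: "n \<ge> 1" "real n \<le> 2 * real N" and NW: "\<bar>real N - real n\<bar> \<le> W"
    and SB: "\<bar>SN - Sn\<bar> \<le> B" and SA: "\<bar>Sn\<bar> \<le> A"
  shows "\<bar>SN / real N - Sn / real n\<bar> \<le> 2 * B / real n + 2 * A * W / (real n)\<^sup>2"
proof -
  have N0: "real N > 0" and n0: "real n > 0" using n by auto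
  have inv_N: "1 / real N \<le> 2 / real n" using N0 n0 n by (simp add: field_simps)
  have "\<bar>(SN - Sn) / real N\<bar> = \<bar>SN - Sn\<bar> * (1 / real N)" using N0 by (simp add: abs_divide)
  also have "\<dots> \<le> B * (2 / real n)" using SB inv_N by (intro mult_mono) auto
  finally have t1: "\<bar>(SN - Sn) / real N\<bar> \<le> 2 * B / real n" by (simp add: mult.commute)
  have "\<bar>Sn * (real n - real N) / (real N * real n)\<bar>
      = (\<bar>Sn\<bar> * \<bar>real N - real n\<bar>) * (1 / real N) * (1 / real n)"
    using N0 n0 by (simp add: abs_divide abs_mult abs_minus_commute)
  also have "\<dots> \<le> (A * W) * (2 / real n) * (1 / real n)"
    using SA NW inv_N n0 by (intro mult_mono mult_nonneg_nonneg) auto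
  finally have t2: "\<bar>Sn * (real n - real N) / (real N * real n)\<bar> \<le> 2 * A * W / (real n)\<^sup>2"
    by (simp add: power2_eq_square mult_ac)
  have "SN / real N - Sn / real n = (SN - Sn) / real N + Sn * (real n - real N) / (real N * real n)"
    using N0 n0 by (simp add: field_simps)
  with t1 t2 show ?thesis by linarith
qed

section \<open>Comparison of the two estimators\<close>

lemma abs_average_le_sup_norm: "\<bar>1 / real j * (\<Sum>t=1..j. f (x t))\<bar> \<le> sup_norm f"
proof (cases "j = 0")
  case False
  have "\<bar>\<Sum>t=1..j. f (x t)\<bar> \<le> (\<Sum>t=1..j. \<bar>f (x t)\<bar>)" by (rule sum_abs)
  also have "\<dots> \<le> (\<Sum>t=1..j. sup_norm f)" by (intro sum_mono abs_le_sup_norm)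
  finally have "\<bar>\<Sum>t=1..j. f (x t)\<bar> \<le> real j * sup_norm f" by simp
  then show ?thesis using False by (simp add: abs_mult field_simps)
qed (simp add: sup_norm_nonneg)

lemma of_bool_bex_le_sum:
  assumes "finite I"
  shows "(of_bool (\<exists>m\<in>I. Q m) :: real) \<le> (\<Sum>m\<in>I. of_bool (Q m))"
proof (cases "\<exists>m\<in>I. Q m")
  case True
  then obtain m where "m \<in> I" "Q m" by blast
  then show ?thesis using assms member_le_sum[of m I "\<lambda>m. of_bool (Q m) :: real"] by simp
qed (simp add: sum_nonneg)

context finite_markov_chain
begin

lemma measurable_visits_eq: "(\<lambda>\<omega>. visits S X j \<omega> = k) \<in> measurable M (count_space UNIV)"
proof -
  define G where "G x = (\<Sum>t\<in>{1..j}. of_bool (x t \<in> S) :: real)" for x :: "nat \<Rightarrow> 'a"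
  have [measurable]: "(\<lambda>\<omega>. G (\<lambda>i. X i \<omega>)) \<in> borel_measurable M"
    using bounded_rv_path_function[of "Suc j" G] unfolding bounded_rv_def depends_upto_def G_def by simp
  have eq: "(\<lambda>\<omega>. visits S X j \<omega> = k) = (\<lambda>\<omega>. G (\<lambda>i. X i \<omega>) = real k)"
    unfolding G_def of_nat_visits[symmetric] by simp
  show ?thesis unfolding eq by measurable
qed

lemma measurable_hitN: "hitN S X k \<in> measurable M (count_space UNIV)"
  unfolding hitN_def[abs_def] by (rule measurable_Least) (rule measurable_visits_eq)

lemma bounded_rv_average:
  "bounded_rv M (\<lambda>\<omega>. 1 / real j * (\<Sum>t=1..j. f (X t \<omega>)))"
  using bounded_rv_path_function[of "Suc j" "\<lambda>x. 1 / real j * (\<Sum>t=1..j. f (x t))"]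
  unfolding depends_upto_def by simp

lemma bounded_rv_mu_hat: "bounded_rv M (mu_hat f X n)"
  using bounded_rv_average unfolding mu_hat_def[abs_def] .

lemma bounded_rv_mu_tilde: "bounded_rv M (mu_tilde S f X k)"
  unfolding bounded_rv_def
proof
  have "(\<lambda>\<omega>. 1 / real j * (\<Sum>t=1..j. f (X t \<omega>))) \<in> borel_measurable M" for j
    using bounded_rv_average unfolding bounded_rv_def by blast
  then have "(\<lambda>\<omega>. (\<lambda>j \<omega>. 1 / real j * (\<Sum>t=1..j. f (X t \<omega>))) (hitN S X k \<omega>) \<omega>) \<in> borel_measurable M"
    by (rule measurable_compose_countable'[OF _ measurable_hitN]) simp
  then show "mu_tilde S f X k \<in> borel_measurable M" unfolding mu_tilde_def[abs_def] by simp
  show "\<exists>K. \<forall>\<omega>\<in>space M. \<bar>mu_tilde S f X k \<omega>\<bar> \<le> K"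
    unfolding mu_tilde_def using abs_average_le_sup_norm[of _ f "\<lambda>t. X t _"] by blast
qed

end

locale visit_estimators = ergodic_markov_chain M X p0 P \<pi>
  for M :: "'b measure" and X :: "nat \<Rightarrow> 'b \<Rightarrow> 'a::finite" and p0 P \<pi> +
  fixes f :: "'a \<Rightarrow> real" and S :: "'a set"
  assumes S_nonempty: "S \<noteq> {}"
begin

definition pS :: real where "pS = dist_mass \<pi> S"

definition f0 :: "'a \<Rightarrow> real" where "f0 u = f u - (\<Sum>x\<in>UNIV. \<pi> x * f x)"

definition e0 :: "'a \<Rightarrow> real" where "e0 u = of_bool (u \<in> S) - pS"

definition hf :: "'a \<Rightarrow> real" where "hf = (SOME h. \<forall>x. h x - apply_kernel P h x = f0 x)"

definition he :: "'a \<Rightarrow> real" where "he = (SOME h. \<forall>x. h x - apply_kernel P h x = e0 x)"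

definition f0_sum :: "nat \<Rightarrow> (nat \<Rightarrow> 'a) \<Rightarrow> real" where
  "f0_sum j x = (\<Sum>t\<in>{1..<Suc j}. f0 (x t))"

definition e0_sum :: "nat \<Rightarrow> (nat \<Rightarrow> 'a) \<Rightarrow> real" where
  "e0_sum j x = (\<Sum>t\<in>{1..<Suc j}. e0 (x t))"

definition kn :: "nat \<Rightarrow> nat" where "kn n = nat \<lceil>real n * pS\<rceil>"

definition rho :: "nat \<Rightarrow> real" where "rho n = real n powr (1/5)"

definition window :: "nat \<Rightarrow> nat" where
  "window n = nat \<lceil>(2 * (rho n ^ 3 + 2 * sup_norm he) + 1) / pS\<rceil>"

text \<open>The good event for sample size \<open>n\<close>, with \<open>r = n\<^sup>1\<^sup>/\<^sup>5\<close>: visit counts within \<open>r\<^sup>3\<close> of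
  their means up to time \<open>2n\<close> trap \<open>N(k\<^sub>n)\<close> in the window \<open>n \<plusminus> W\<^sub>n\<close> (as \<open>W\<^sub>n \<pi>(S)\<close> exceeds
  twice that deviation), on which the partial sums of \<open>f - \<mu>\<close> move by less than \<open>r\<^sup>2\<close>. The
  extra slack \<open>2 \<parallel>h\<parallel>\<close> absorbs the boundary terms of the Poisson decomposition.\<close>

definition good :: "nat \<Rightarrow> (nat \<Rightarrow> 'a) \<Rightarrow> bool" where
  "good n x \<longleftrightarrow> (\<forall>m\<in>{1..2*n}. \<bar>e0_sum m x\<bar> < rho n ^ 3 + 2 * sup_norm he)
     \<and> (\<forall>m\<in>{n - window n..n + window n}. \<bar>f0_sum m x - f0_sum n x\<bar> < rho n ^ 2 + 2 * sup_norm hf)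
     \<and> \<bar>f0_sum n x\<bar> < rho n ^ 3 + 2 * sup_norm hf"

definition good_bound :: "nat \<Rightarrow> real" where
  "good_bound n = (2 * (rho n ^ 2 + 2 * sup_norm hf) / real n
     + 2 * (rho n ^ 3 + 2 * sup_norm hf) * real (window n) / (real n)\<^sup>2)\<^sup>2"

lemma pS_pos: "pS > 0"
proof -
  obtain s where s: "s \<in> S" using S_nonempty by blast
  have "0 < \<pi> s" by (rule invariant_pos)
  also have "\<dots> \<le> (\<Sum>x\<in>S. \<pi> x)"
    using s invariant_pos by (intro member_le_sum) (auto intro: less_imp_le)
  finally show ?thesis unfolding pS_def dist_mass_def .
qed

lemma poisson_hf: "hf x - apply_kernel P hf x = f0 x"
  using someI_ex[OF poisson_equation[OF sum_invariant_centered[of f]]]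
  unfolding hf_def f0_def by blast

lemma poisson_he: "he x - apply_kernel P he x = e0 x"
proof -
  have "(\<Sum>u\<in>UNIV. \<pi> u * of_bool (u \<in> S)) = pS"
    unfolding pS_def dist_mass_def by (simp add: Int_absorb1)
  then show ?thesis
    using someI_ex[OF poisson_equation[OF sum_invariant_centered[of "\<lambda>u. of_bool (u \<in> S)"]]]
    unfolding he_def e0_def by simp
qed

lemma rho_pow5: "rho n ^ 5 = real n"
proof (cases "n = 0")
  case False
  then have "(real n powr (1/5)) ^ 5 = (real n powr (1/5)) powr (real 5)"
    by (simp add: powr_realpow)
  then show ?thesis unfolding rho_def by (simp add: powr_powr)
qed (simp add: rho_def)

lemma rho_ge1: "n \<ge> 1 \<Longrightarrow> rho n \<ge> 1"
  unfolding rho_def by (intro ge_one_powr_ge_zero) auto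

lemma of_nat_visits_eq: "real (visits S X j \<omega>) = e0_sum j (\<lambda>i. X i \<omega>) + real j * pS"
  unfolding of_nat_visits e0_sum_def e0_def
  by (simp add: sum_subtractf atLeastLessThanSuc_atLeastAtMost)

lemma sum_f_eq_f0_sum: "(\<Sum>t=1..j. f (x t)) = f0_sum j x + real j * (\<Sum>u\<in>UNIV. \<pi> u * f u)"
  unfolding f0_sum_def f0_def by (simp add: sum_subtractf atLeastLessThanSuc_atLeastAtMost)

lemma hitN_kn_near_n:
  assumes n: "n \<ge> 1" "2 * window n < n" and good: "good n (\<lambda>i. X i \<omega>)"
  shows "n - window n < hitN S X (kn n) \<omega>" "hitN S X (kn n) \<omega> \<le> n + window n"
proof -
  define W where "W = window n"
  define A where "A = rho n ^ 3 + 2 * sup_norm he"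
  define k where "k = kn n"
  have A0: "A \<ge> 0" unfolding A_def using rho_ge1[OF n(1)] sup_norm_nonneg[of he] by simp
  have visits_close: "\<bar>real (visits S X m \<omega>) - real m * pS\<bar> < A" if "m \<in> {1..2*n}" for m
    using good that unfolding good_def of_nat_visits_eq A_def by auto
  have "(2 * A + 1) / pS \<le> real W" unfolding W_def window_def A_def by (rule real_nat_ceiling_ge)
  then have W_pS: "real W * pS \<ge> 2 * A + 1" using pS_pos by (simp add: divide_le_eq)
  have "real k = of_int \<lceil>real n * pS\<rceil>" unfolding k_def kn_def using pS_pos by simp
  then have k: "real n * pS \<le> real k" "real k < real n * pS + 1"
    using ceiling_correct[of "real n * pS"] by linarith+
  have window_range: "n - W \<in> {1..2*n}" "n + W \<in> {1..2*n}" using n unfolding W_def by auto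
  have "real (n + W) * pS - A < real (visits S X (n + W) \<omega>)"
    using visits_close[OF window_range(2)] by (simp add: abs_less_iff)
  then have "k \<le> visits S X (n + W) \<omega>"
    using W_pS k A0 by (simp add: algebra_simps)
  moreover have "real (visits S X (n - W) \<omega>) < real (n - W) * pS + A"
    using visits_close[OF window_range(1)] by (simp add: abs_less_iff)
  then have "visits S X (n - W) \<omega> < k"
    using W_pS k A0 n unfolding W_def by (simp add: of_nat_diff algebra_simps)
  ultimately show "n - window n < hitN S X (kn n) \<omega>" "hitN S X (kn n) \<omega> \<le> n + window n"
    unfolding k_def W_def by (rule hitN_between)+
qed

lemma square_estimator_diff_le:
  assumes n: "n \<ge> 1" "2 * window n < n" and good: "good n (\<lambda>i. X i \<omega>)"
  shows "(mu_tilde S f X (kn n) \<omega> - mu_hat f X n \<omega>)\<^sup>2 \<le> good_bound n"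
proof -
  define x where "x = (\<lambda>i. X i \<omega>)"
  define N where "N = hitN S X (kn n) \<omega>"
  have N: "n - window n < N" "N \<le> n + window n"
    using hitN_kn_near_n[OF n good] unfolding N_def by auto
  have "\<bar>mu_tilde S f X (kn n) \<omega> - mu_hat f X n \<omega>\<bar> = \<bar>f0_sum N x / real N - f0_sum n x / real n\<bar>"
    using N n unfolding mu_tilde_def mu_hat_def N_def[symmetric] sum_f_eq_f0_sum x_def
    by (simp add: field_simps)
  also have "\<dots> \<le> 2 * (rho n ^ 2 + 2 * sup_norm hf) / real n
      + 2 * (rho n ^ 3 + 2 * sup_norm hf) * real (window n) / (real n)\<^sup>2"
  proof (rule abs_ratio_diff_le)
    show "real n \<le> 2 * real N" "\<bar>real N - real n\<bar> \<le> real (window n)" using N n by auto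
    have "N \<in> {n - window n..n + window n}" using N by auto
    then show "\<bar>f0_sum N x - f0_sum n x\<bar> \<le> rho n ^ 2 + 2 * sup_norm hf"
      using good unfolding good_def x_def by (fastforce intro: less_imp_le)
    show "\<bar>f0_sum n x\<bar> \<le> rho n ^ 3 + 2 * sup_norm hf"
      using good unfolding good_def x_def by (fastforce intro: less_imp_le)
  qed (use n in simp)
  finally have "\<bar>mu_tilde S f X (kn n) \<omega> - mu_hat f X n \<omega>\<bar>\<^sup>2 \<le> good_bound n"
    unfolding good_bound_def by (rule power_mono) (rule abs_ge_zero)
  then show ?thesis by (simp only: power2_abs)
qed

definition window_const :: real where "window_const = (4 * sup_norm he + 3) / pS + 1"

definition tail_const :: real where
  "tail_const = 8 * (2 * sup_norm he + 1)\<^sup>2 + 4 * window_const * (2 * sup_norm hf + 1)\<^sup>2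
  + 4 * (2 * sup_norm hf + 1)\<^sup>2"

lemma window_const_pos: "window_const > 0"
  unfolding window_const_def using sup_norm_nonneg[of he] pS_pos by (simp add: add_pos_nonneg)

lemma tail_const_pos: "tail_const > 0"
proof -
  have "1 \<le> (2 * sup_norm he + 1)\<^sup>2" using sup_norm_nonneg[of he] by (simp add: one_le_power)
  moreover have "0 \<le> 4 * window_const * (2 * sup_norm hf + 1)\<^sup>2" using window_const_pos by simp
  moreover have "0 \<le> 4 * (2 * sup_norm hf + 1)\<^sup>2" by simp
  ultimately show ?thesis unfolding tail_const_def by linarith
qed

lemma window_le:
  assumes "n \<ge> 1"
  shows "real (window n) \<le> window_const * rho n ^ 3"
proof -
  define y where "y = (2 * (rho n ^ 3 + 2 * sup_norm he) + 1) / pS"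
  have r3: "rho n ^ 3 \<ge> 1" using rho_ge1[OF assms] by (simp add: one_le_power)
  have "y \<ge> 0" unfolding y_def using pS_pos sup_norm_nonneg[of he] r3 by simp
  then have "real (window n) \<le> y + 1"
    unfolding window_def y_def[symmetric] using ceiling_correct[of y] by linarith
  also have "y \<le> (4 * sup_norm he + 3) * rho n ^ 3 / pS"
  proof -
    have "4 * sup_norm he \<le> 4 * sup_norm he * rho n ^ 3"
      using r3 sup_norm_nonneg[of he] by (simp add: mult_le_cancel_left1)
    then show ?thesis
      unfolding y_def using pS_pos r3 by (intro divide_right_mono) (auto simp: algebra_simps)
  qed
  finally show ?thesis using r3 unfolding window_const_def by (simp add: algebra_simps)
qed

lemma f0_sum_diff:
  "\<bar>f0_sum m x - f0_sum n x\<bar> = \<bar>\<Sum>t\<in>{Suc (min m n)..<Suc (max m n)}. f0 (x t)\<bar>"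
proof -
  have "f0_sum (max m n) x = f0_sum (min m n) x + (\<Sum>t\<in>{Suc (min m n)..<Suc (max m n)}. f0 (x t))"
    unfolding f0_sum_def by (rule sum.atLeastLessThan_concat[symmetric]) auto
  then show ?thesis by (cases "m \<le> n") (auto simp: max_def min_def abs_minus_commute)
qed

lemma depends_upto_good:
  assumes "window n < n"
  shows "depends_upto (Suc (2 * n)) (\<lambda>x. of_bool (good n x) :: real)"
  unfolding depends_upto_def
proof (intro allI impI)
  fix x x' :: "nat \<Rightarrow> 'a" assume same: "\<forall>i\<in>{1..Suc (2 * n)}. x i = x' i"
  have "e0_sum m x = e0_sum m x'" "f0_sum m x = f0_sum m x'" if "m \<le> 2 * n" for m
    unfolding e0_sum_def f0_sum_def using same that by (auto intro!: sum.cong)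
  then have "good n x = good n x'"
    unfolding good_def using assms by (auto simp: Ball_def)
  then show "(of_bool (good n x) :: real) = of_bool (good n x')" by simp
qed

lemma tail_const_ge:
  "8 * (2 * sup_norm he + 1)\<^sup>2 \<le> tail_const"
  "4 * window_const * (2 * sup_norm hf + 1)\<^sup>2 \<le> tail_const"
  "4 * (2 * sup_norm hf + 1)\<^sup>2 \<le> tail_const"
  using window_const_pos unfolding tail_const_def by simp_all

lemma rho_cube_square: "(rho n ^ 3)\<^sup>2 = rho n * real n"
  unfolding rho_pow5[symmetric] by (simp add: numeral_eq_Suc)

text \<open>The three kinds of deviations excluded by \<open>good\<close> have sub-Gaussian tails of order
  \<open>exp(-c r)\<close>: the thresholds \<open>r\<^sup>3\<close> and \<open>r\<^sup>2\<close> are compared with \<open>\<surd>n = r\<^sup>5\<^sup>/\<^sup>2\<close> and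
  \<open>\<surd>W\<^sub>n = O(r\<^sup>3\<^sup>/\<^sup>2)\<close>.\<close>

lemma E_e0_sum_tail_le:
  assumes "n \<ge> 1" "m \<in> {1..2*n}"
  shows "E (Suc (2 * n)) (\<lambda>x. of_bool (rho n ^ 3 + 2 * sup_norm he \<le> \<bar>e0_sum m x\<bar>))
    \<le> 2 * exp (- (rho n / tail_const))"
proof -
  define c where "c = 2 * sup_norm he + 1"
  have r: "rho n \<ge> 1" by (rule rho_ge1[OF assms(1)])
  have c: "c \<ge> 1" unfolding c_def using sup_norm_nonneg[of he] by simp
  have "rho n / tail_const \<le> rho n / (8 * c\<^sup>2)"
    using tail_const_ge(1) tail_const_pos r c unfolding c_def by (intro divide_left_mono) auto
  also have "\<dots> = (rho n ^ 3)\<^sup>2 / (4 * real (2 * n) * c\<^sup>2)" unfolding rho_cube_square using assms by simp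
  also have "\<dots> \<le> (rho n ^ 3)\<^sup>2 / (4 * real m * c\<^sup>2)"
    using assms c by (intro divide_left_mono mult_right_mono mult_left_mono) auto
  finally have "2 * exp (- ((rho n ^ 3)\<^sup>2) / (4 * real m * c\<^sup>2)) \<le> 2 * exp (- (rho n / tail_const))"
    by simp
  moreover have "E (Suc (2 * n)) (\<lambda>x. of_bool (rho n ^ 3 + 2 * sup_norm he \<le> \<bar>e0_sum m x\<bar>))
      \<le> 2 * exp (- ((rho n ^ 3)\<^sup>2) / (4 * real m * c\<^sup>2))"
    using E_additive_tail_le[OF poisson_he, of 1 "Suc m" "Suc (2 * n)" "rho n ^ 3"] assms r
    unfolding e0_sum_def c_def by simp
  ultimately show ?thesis by linarith
qed

lemma E_f0_sum_window_tail_le: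
  assumes n: "n \<ge> 1" "2 * window n < n" and m: "m \<in> {n - window n..n + window n}"
  shows "E (Suc (2 * n)) (\<lambda>x. of_bool (rho n ^ 2 + 2 * sup_norm hf \<le> \<bar>f0_sum m x - f0_sum n x\<bar>))
    \<le> 2 * exp (- (rho n / tail_const))"
proof (cases "m = n")
  case True
  have "0 < rho n ^ 2 + 2 * sup_norm hf"
    using rho_ge1[OF n(1)] sup_norm_nonneg[of hf] by (simp add: add_pos_nonneg)
  then show ?thesis unfolding True by (simp add: not_le E_zero)
next
  case False
  define c where "c = 2 * sup_norm hf + 1"
  define L where "L = Suc (max m n) - Suc (min m n)"
  have r: "rho n \<ge> 1" by (rule rho_ge1[OF n(1)])
  have c: "c \<ge> 1" unfolding c_def using sup_norm_nonneg[of hf] by simp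
  have L: "1 \<le> L" "L \<le> window n" using False m unfolding L_def by (auto simp: max_def min_def)
  have "rho n / tail_const \<le> rho n / (4 * window_const * c\<^sup>2)"
    using tail_const_ge(2) tail_const_pos window_const_pos r c unfolding c_def
    by (intro divide_left_mono) auto
  also have "\<dots> = (rho n ^ 2)\<^sup>2 / (4 * (window_const * rho n ^ 3) * c\<^sup>2)"
    using r by (simp add: power2_eq_square power3_eq_cube)
  also have "\<dots> \<le> (rho n ^ 2)\<^sup>2 / (4 * real L * c\<^sup>2)"
    using L window_le[OF n(1)] c r window_const_pos
    by (intro divide_left_mono mult_right_mono mult_left_mono) auto
  finally have "2 * exp (- ((rho n ^ 2)\<^sup>2) / (4 * real L * c\<^sup>2)) \<le> 2 * exp (- (rho n / tail_const))"
    by simp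
  moreover have "E (Suc (2 * n)) (\<lambda>x. of_bool (rho n ^ 2 + 2 * sup_norm hf \<le> \<bar>f0_sum m x - f0_sum n x\<bar>))
      \<le> 2 * exp (- ((rho n ^ 2)\<^sup>2) / (4 * real L * c\<^sup>2))"
    using E_additive_tail_le[OF poisson_hf, of "Suc (min m n)" "Suc (max m n)" "Suc (2 * n)" "rho n ^ 2"]
      m n r unfolding f0_sum_diff c_def L_def by (simp add: max_def min_def)
  ultimately show ?thesis by linarith
qed

lemma E_f0_sum_tail_le:
  assumes "n \<ge> 1"
  shows "E (Suc (2 * n)) (\<lambda>x. of_bool (rho n ^ 3 + 2 * sup_norm hf \<le> \<bar>f0_sum n x\<bar>))
    \<le> 2 * exp (- (rho n / tail_const))"
proof -
  define c where "c = 2 * sup_norm hf + 1"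
  have r: "rho n \<ge> 1" by (rule rho_ge1[OF assms])
  have c: "c \<ge> 1" unfolding c_def using sup_norm_nonneg[of hf] by simp
  have "rho n / tail_const \<le> rho n / (4 * c\<^sup>2)"
    using tail_const_ge(3) tail_const_pos r c unfolding c_def by (intro divide_left_mono) auto
  also have "\<dots> = (rho n ^ 3)\<^sup>2 / (4 * real n * c\<^sup>2)" unfolding rho_cube_square using assms by simp
  finally have "2 * exp (- ((rho n ^ 3)\<^sup>2) / (4 * real n * c\<^sup>2)) \<le> 2 * exp (- (rho n / tail_const))"
    by simp
  moreover have "E (Suc (2 * n)) (\<lambda>x. of_bool (rho n ^ 3 + 2 * sup_norm hf \<le> \<bar>f0_sum n x\<bar>))
      \<le> 2 * exp (- ((rho n ^ 3)\<^sup>2) / (4 * real n * c\<^sup>2))"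
    using E_additive_tail_le[OF poisson_hf, of 1 "Suc n" "Suc (2 * n)" "rho n ^ 3"] assms r
    unfolding f0_sum_def c_def by simp
  ultimately show ?thesis by linarith
qed

lemma E_not_good_le:
  assumes n: "n \<ge> 1" "2 * window n < n"
  shows "E (Suc (2 * n)) (\<lambda>x. of_bool (\<not> good n x))
    \<le> real (2 * n + 2 * window n + 2) * (2 * exp (- (rho n / tail_const)))"
proof -
  define T where "T = Suc (2 * n)"
  define W where "W = window n"
  define e where "e = 2 * exp (- (rho n / tail_const))"
  define Q1 where "Q1 m x \<longleftrightarrow> rho n ^ 3 + 2 * sup_norm he \<le> \<bar>e0_sum m x\<bar>" for m x
  define Q2 where "Q2 m x \<longleftrightarrow> rho n ^ 2 + 2 * sup_norm hf \<le> \<bar>f0_sum m x - f0_sum n x\<bar>" for m x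
  define Q3 where "Q3 x \<longleftrightarrow> rho n ^ 3 + 2 * sup_norm hf \<le> \<bar>f0_sum n x\<bar>" for x
  have union: "of_bool (\<not> good n x) \<le> (\<Sum>m\<in>{1..2*n}. of_bool (Q1 m x))
      + (\<Sum>m\<in>{n-W..n+W}. of_bool (Q2 m x)) + (of_bool (Q3 x) :: real)" for x
  proof -
    have "\<not> good n x \<longleftrightarrow> (\<exists>m\<in>{1..2*n}. Q1 m x) \<or> (\<exists>m\<in>{n-W..n+W}. Q2 m x) \<or> Q3 x"
      unfolding good_def Q1_def Q2_def Q3_def W_def by (auto simp: not_less)
    then have "(of_bool (\<not> good n x) :: real)
        \<le> of_bool (\<exists>m\<in>{1..2*n}. Q1 m x) + of_bool (\<exists>m\<in>{n-W..n+W}. Q2 m x) + of_bool (Q3 x)"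
      by auto
    also have "\<dots> \<le> (\<Sum>m\<in>{1..2*n}. of_bool (Q1 m x)) + (\<Sum>m\<in>{n-W..n+W}. of_bool (Q2 m x))
        + of_bool (Q3 x)"
      by (intro add_mono of_bool_bex_le_sum order_refl) auto
    finally show ?thesis .
  qed
  have "E T (\<lambda>x. of_bool (\<not> good n x)) \<le> (\<Sum>m\<in>{1..2*n}. E T (\<lambda>x. of_bool (Q1 m x)))
      + (\<Sum>m\<in>{n-W..n+W}. E T (\<lambda>x. of_bool (Q2 m x))) + E T (\<lambda>x. of_bool (Q3 x))"
    using E_mono[OF union, of T] by (simp only: E_add E_sum)
  also have "\<dots> \<le> (\<Sum>m\<in>{1..2*n}. e) + (\<Sum>m\<in>{n-W..n+W}. e) + e"
    unfolding Q1_def Q2_def Q3_def T_def W_def e_def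
    by (intro add_mono sum_mono E_e0_sum_tail_le E_f0_sum_window_tail_le E_f0_sum_tail_le n)
  also have "\<dots> = real (2 * n + 2 * W + 2) * e"
    using n unfolding W_def by (simp add: algebra_simps)
  finally show ?thesis unfolding T_def W_def e_def .
qed

lemma variance_estimator_diff_le:
  assumes n: "n \<ge> 1" "2 * window n < n"
  shows "variance (\<lambda>\<omega>. mu_tilde S f X (kn n) \<omega> - mu_hat f X n \<omega>)
    \<le> good_bound n + (2 * sup_norm f)\<^sup>2 * E (Suc (2 * n)) (\<lambda>x. of_bool (\<not> good n x))"
proof -
  define T where "T = Suc (2 * n)"
  define C where "C \<omega> = mu_tilde S f X (kn n) \<omega> - mu_hat f X n \<omega>" for \<omega>
  define \<Phi> where "\<Phi> x = good_bound n * of_bool (good n x) + (2 * sup_norm f)\<^sup>2 * (1 - of_bool (good n x))"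
    for x
  have \<Phi>: "depends_upto T \<Phi>"
    using depends_upto_comp[OF depends_upto_good[of n],
        of "\<lambda>b. good_bound n * b + (2 * sup_norm f)\<^sup>2 * (1 - b)"] n
    unfolding \<Phi>_def T_def by simp
  have C: "bounded_rv M C" unfolding C_def by (intro bounded_rv_diff bounded_rv_mu_tilde bounded_rv_mu_hat)
  have C_square: "(C \<omega>)\<^sup>2 \<le> \<Phi> (\<lambda>i. X i \<omega>)" for \<omega>
  proof (cases "good n (\<lambda>i. X i \<omega>)")
    case True
    then show ?thesis unfolding \<Phi>_def C_def using square_estimator_diff_le[OF n True] by simp
  next
    case False
    have "\<bar>C \<omega>\<bar> \<le> sup_norm f + sup_norm f" unfolding C_def mu_tilde_def mu_hat_def
      by (rule order_trans[OF abs_triangle_ineq4 add_mono]) (rule abs_average_le_sup_norm)+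
    then have "\<bar>C \<omega>\<bar>\<^sup>2 \<le> (2 * sup_norm f)\<^sup>2" by (intro power_mono) auto
    then show ?thesis unfolding \<Phi>_def using False by simp
  qed
  have "variance C \<le> expectation (\<lambda>\<omega>. (C \<omega>)\<^sup>2)" by (rule variance_le_expectation_square[OF C])
  also have "\<dots> \<le> expectation (\<lambda>\<omega>. \<Phi> (\<lambda>i. X i \<omega>))"
    using integrable_bounded_rv_square[OF C] integrable_path_function[OF _ \<Phi>] C_square
    unfolding T_def by (intro integral_mono) auto
  also have "\<dots> = E T \<Phi>" by (rule expectation_path_function[OF _ \<Phi>]) (simp add: T_def)
  also have "\<dots> \<le> E T (\<lambda>x. good_bound n + (2 * sup_norm f)\<^sup>2 * of_bool (\<not> good n x))"
    by (rule E_mono) (auto simp: \<Phi>_def good_bound_def)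
  also have "\<dots> = good_bound n + (2 * sup_norm f)\<^sup>2 * E T (\<lambda>x. of_bool (\<not> good n x))"
    by (simp add: E_add E_cmult E_const T_def)
  finally show ?thesis unfolding C_def T_def .
qed

lemma scaled_variance_estimator_diff_le:
  assumes n: "n \<ge> 1" and large: "2 * window_const * rho n ^ 3 < real n"
  shows "real n * variance (\<lambda>\<omega>. mu_tilde S f X (kn n) \<omega> - mu_hat f X n \<omega>)
    \<le> real n * (2 * (rho n ^ 2 + 2 * sup_norm hf) / real n
        + 2 * (rho n ^ 3 + 2 * sup_norm hf) * (window_const * rho n ^ 3) / (real n)\<^sup>2)\<^sup>2
      + (2 * sup_norm f)\<^sup>2 * (real n * ((2 * real n + 2 * (window_const * rho n ^ 3) + 2)
        * (2 * exp (- (rho n / tail_const)))))" (is "_ \<le> ?rhs")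
proof -
  have W: "real (window n) \<le> window_const * rho n ^ 3" by (rule window_le[OF n])
  then have W2: "2 * window n < n" using large by linarith
  have good: "good_bound n \<le> (2 * (rho n ^ 2 + 2 * sup_norm hf) / real n
      + 2 * (rho n ^ 3 + 2 * sup_norm hf) * (window_const * rho n ^ 3) / (real n)\<^sup>2)\<^sup>2"
    unfolding good_bound_def using W rho_ge1[OF n] sup_norm_nonneg[of hf]
    by (intro power_mono add_mono divide_right_mono mult_left_mono) auto
  have "E (Suc (2 * n)) (\<lambda>x. of_bool (\<not> good n x))
      \<le> real (2 * n + 2 * window n + 2) * (2 * exp (- (rho n / tail_const)))"
    by (rule E_not_good_le[OF n W2])
  also have "\<dots> \<le> (2 * real n + 2 * (window_const * rho n ^ 3) + 2) * (2 * exp (- (rho n / tail_const)))"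
    using W by (intro mult_right_mono) auto
  finally have bad: "E (Suc (2 * n)) (\<lambda>x. of_bool (\<not> good n x))
      \<le> (2 * real n + 2 * (window_const * rho n ^ 3) + 2) * (2 * exp (- (rho n / tail_const)))" .
  have "real n * variance (\<lambda>\<omega>. mu_tilde S f X (kn n) \<omega> - mu_hat f X n \<omega>)
      \<le> real n * good_bound n + (2 * sup_norm f)\<^sup>2 * (real n * E (Suc (2 * n)) (\<lambda>x. of_bool (\<not> good n x)))"
    using mult_left_mono[OF variance_estimator_diff_le[OF n W2], of "real n"] by (simp add: algebra_simps)
  also have "\<dots> \<le> ?rhs"
    by (intro add_mono mult_left_mono good bad) auto
  finally show ?thesis .
qed

text \<open>With \<open>r = n\<^sup>1\<^sup>/\<^sup>5\<close> the bound is \<open>O(r\<^sup>-\<^sup>1 + r\<^sup>1\<^sup>0 exp(-r/\<kappa>))\<close>.\<close>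

lemma scaled_variance_estimator_diff_tendsto_0:
  "(\<lambda>n. real n * variance (\<lambda>\<omega>. mu_tilde S f X (kn n) \<omega> - mu_hat f X n \<omega>)) \<longlonglongrightarrow> 0"
proof -
  define K H \<kappa> where "K = window_const" and "H = sup_norm hf" and "\<kappa> = tail_const"
  define \<phi> where "\<phi> n = real n * (2 * (rho n ^ 2 + 2 * H) / real n
      + 2 * (rho n ^ 3 + 2 * H) * (K * rho n ^ 3) / (real n)\<^sup>2)\<^sup>2
    + (2 * sup_norm f)\<^sup>2 * (real n * ((2 * real n + 2 * (K * rho n ^ 3) + 2)
        * (2 * exp (- (rho n / \<kappa>)))))" for n
  have "\<forall>\<^sub>F n in sequentially. 2 * K * rho n ^ 3 < real n"
    unfolding rho_def by real_asymp
  then have upper: "\<forall>\<^sub>F n in sequentially.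
      real n * variance (\<lambda>\<omega>. mu_tilde S f X (kn n) \<omega> - mu_hat f X n \<omega>) \<le> \<phi> n"
    using eventually_ge_at_top[of 1]
  proof eventually_elim
    case (elim n)
    show ?case unfolding \<phi>_def K_def H_def \<kappa>_def
      by (rule scaled_variance_estimator_diff_le[OF elim(2) elim(1)[unfolded K_def]])
  qed
  have "(\<lambda>n. real n * (2 * (rho n ^ 2 + 2 * H) / real n
      + 2 * (rho n ^ 3 + 2 * H) * (K * rho n ^ 3) / (real n)\<^sup>2)\<^sup>2) \<longlonglongrightarrow> 0"
    unfolding rho_def by real_asymp
  moreover have "(\<lambda>n. real n * ((2 * real n + 2 * (K * rho n ^ 3) + 2)
      * (2 * exp (- (rho n / \<kappa>))))) \<longlonglongrightarrow> 0"
    using tail_const_pos unfolding rho_def \<kappa>_def[symmetric] by real_asymp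
  ultimately have "\<phi> \<longlonglongrightarrow> 0 + (2 * sup_norm f)\<^sup>2 * 0"
    unfolding \<phi>_def by (intro tendsto_add tendsto_mult tendsto_const)
  then show ?thesis
    by (intro tendsto_sandwich[OF always_eventually[OF allI] upper tendsto_const])
      (simp_all add: variance_positive)
qed

end

theorem lemma1:
  fixes M :: "'b measure" and X :: "nat \<Rightarrow> 'b \<Rightarrow> 'a::finite"
    and p0 :: "'a \<Rightarrow> real" and P :: "'a \<Rightarrow> 'a \<Rightarrow> real" and \<pi> :: "'a \<Rightarrow> real"
    and S :: "'a set" and f :: "'a \<Rightarrow> real" and \<mu> :: real
  assumes "markov_chain M X p0 P"
    and "irreducible_chain P"
    and "invariant_distribution P \<pi>"
    and "S \<noteq> {}"
    and "(\<Sum>x\<in>UNIV. \<pi> x * f x) = \<mu>"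
  shows "\<exists>L. (\<lambda>n. real n * prob_space.variance M (mu_hat f X n)) \<longlonglongrightarrow> L
           \<and> (\<lambda>n. real n * prob_space.variance M
                    (mu_tilde S f X (nat \<lceil>real n * dist_mass \<pi> S\<rceil>))) \<longlonglongrightarrow> L"
proof -
  interpret visit_estimators M X p0 P \<pi> f S
    by unfold_locales (use assms in auto)
  obtain L where L: "(\<lambda>n. real n * variance (mu_hat f X n)) \<longlonglongrightarrow> L"
    using mu_hat_scaled_variance_convergent by blast
  have "(\<lambda>n. real n * variance (mu_tilde S f X (kn n))) \<longlonglongrightarrow> L"
    by (rule tendsto_scaled_variance_perturb[OF bounded_rv_mu_tilde bounded_rv_mu_hat _ L
          scaled_variance_estimator_diff_tendsto_0]) simp
  then show ?thesis using L unfolding kn_def pS_def by blast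
qed

end
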